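(* Consider the online resource allocation model with samples described in the context, with a capacity of $m_t$ units during the test period and $m$ units during the allocation period, and the modified Algorithm described in the context. If $m_t=\omega(\sqrt m)$, then the worst-case competitive ratio of the modified Algorithm scales as $1-\Theta\big(1/(p\sqrt m)\big)$ as $m\to\infty$.
   Context: Model: an accepted type-$i$ agent ($i\in\{1,2\}$) yields a reward in $\{0,1\}$ with mean $r_i\in(0,1)$, $r_1>r_2$, unknown to the decision-maker. An adversary chooses integers $h,\ell\ge0$. Each of the $h+\ell$ agents is independently sampled with known probability $p\in(0,1)$; $s_1\sim\mathrm{Bin}(h,p)$, $s_2\sim\mathrm{Bin}(\ell,p)$ are known to the decision-maker. Test-period capacity $m_t$: if $s_1+s_2\le m_t$ all sampled agents receive a unit; if $s_1+s_2>m_t$ and $s_1,s_2>m_t/2$, $m_t/2$ agents of each type receive a unit; if $s_1+s_2>m_t$ and exactly one of $s_1,s_2$ exceeds $m_t/2$, all sampled agents of the type with fewer samples and the rest (up to a total of $m_t$) of the other type receive a unit. Agents receiving a unit reveal realized rewards ($\mathrm{Ber}(r_i)$ i.i.d.); leftover test units do not carry over. Allocation period: the remaining $n_1=h-s_1$, $n_2=\ell-s_2$ agents arrive online in an adversarial order $I$; each is irrevocably accepted (possibly fractionally) or rejected, total allocation at most $m$. $\mathrm{OPT}(I)=r_1\min\{n_1,m\}+r_2\min\{n_2,(m-n_1)^+\}$; competitive ratio $\inf_{(h,\ell)}\mathbb E[\inf_I\mathbb E[\mathrm{REW}_A]/\mathrm{OPT}(I)]$, outer expectation over the sampling and revealed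 rewards. Protection level policy for type $i$ with level $x$: accept type $i$ agents while resource remains; accept type $-i$ agents only while fewer than $m-x$ type $-i$ agents have been accepted and resource remains. Modified Algorithm: for $i\in\{1,2\}$, let $\hat r_i$ be the average realized reward of the type-$i$ agents that received a unit in the test period (if none, $\hat r_i\sim\mathrm{Uniform}(0,1)$). If $\hat r_1>\hat r_2$ use the protection level policy for type 1 with level $\min\{m,s_1\frac{1-p}{p}\}$, otherwise for type 2 with level $\min\{m,s_2\frac{1-p}{p}\}$. *)

theory Defs
  imports "HOL-Probability.Probability" "HOL-Library.Landau_Symbols"
begin

text \<open>Agent types are encoded as booleans: True = type 1 (mean reward r1),
  False = type 2 (mean reward r2).\<close>

text \<open>Test-period allocation: given capacity mt and the sample counts s1, s2,
  returns the numbers (t1, t2) of sampled type-1 / type-2 agents receiving a unit.\<close>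
definition test_alloc :: "nat \<Rightarrow> nat \<Rightarrow> nat \<Rightarrow> nat \<times> nat" where
  "test_alloc mt s1 s2 =
     (if s1 + s2 \<le> mt then (s1, s2)
      else if 2 * s1 > mt \<and> 2 * s2 > mt then (mt div 2, mt div 2)
      else if 2 * s1 > mt then (mt - s2, s2)
      else (s1, mt - s1))"

text \<open>Distribution of the estimate \<open>r_hat\<close> of a type with t tested agents and
  true mean r: empirical mean of t i.i.d. Bernoulli(r) rewards, or Uniform(0,1) if t = 0.\<close>
definition est_measure :: "nat \<Rightarrow> real \<Rightarrow> real measure" where
  "est_measure t r =
     (if t = 0 then uniform_measure lborel {0..1}
      else distr (measure_pmf (binomial_pmf t r)) borel (\<lambda>k. real k / real t))"

text \<open>Protection level policy run on an arrival sequence. Parameters: m (capacity),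
  i (protected type), x (protection level); state (a1, a2) = accepted counts.\<close>
fun prot_run :: "nat \<Rightarrow> bool \<Rightarrow> real \<Rightarrow> bool list \<Rightarrow> nat \<times> nat \<Rightarrow> nat \<times> nat" where
  "prot_run m i x [] a = a"
| "prot_run m i x (t # ts) (a1, a2) =
     (let acc = (a1 + a2 < m \<and> (t = i \<or> real (if t then a1 else a2) < real m - x))
      in prot_run m i x ts
           (if acc then (if t then (Suc a1, a2) else (a1, Suc a2)) else (a1, a2)))"

definition prot_reward :: "nat \<Rightarrow> bool \<Rightarrow> real \<Rightarrow> real \<Rightarrow> real \<Rightarrow> bool list \<Rightarrow> real" where
  "prot_reward m i x r1 r2 I =
     (case prot_run m i x I (0, 0) of (a1, a2) \<Rightarrow> r1 * real a1 + r2 * real a2)"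

definition opt_val :: "nat \<Rightarrow> real \<Rightarrow> real \<Rightarrow> nat \<Rightarrow> nat \<Rightarrow> real" where
  "opt_val m r1 r2 n1 n2 = r1 * real (min n1 m) + r2 * real (min n2 (m - n1))"

definition orders :: "nat \<Rightarrow> nat \<Rightarrow> bool list set" where
  "orders n1 n2 = {I. length (filter (\<lambda>t. t) I) = n1 \<and> length (filter Not I) = n2}"

text \<open>Ratio REW/OPT, with the convention 0/0 = 1 (OPT = 0 only if no agent arrives).\<close>
definition ratio :: "real \<Rightarrow> real \<Rightarrow> real" where
  "ratio rew opt = (if opt = 0 then 1 else rew / opt)"

definition worst_ratio :: "nat \<Rightarrow> bool \<Rightarrow> real \<Rightarrow> real \<Rightarrow> real \<Rightarrow> nat \<Rightarrow> nat \<Rightarrow> real" where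
  "worst_ratio m i x r1 r2 n1 n2 =
     (INF I \<in> orders n1 n2. ratio (prot_reward m i x r1 r2 I) (opt_val m r1 r2 n1 n2))"

definition alg_value :: "nat \<Rightarrow> nat \<Rightarrow> real \<Rightarrow> real \<Rightarrow> real \<Rightarrow> nat \<Rightarrow> nat \<Rightarrow> nat \<Rightarrow> nat \<Rightarrow> real" where
  "alg_value m mt p r1 r2 h l s1 s2 =
     (let n1 = h - s1; n2 = l - s2;
          t1 = fst (test_alloc mt s1 s2); t2 = snd (test_alloc mt s1 s2);
          x1 = min (real m) (real s1 * (1 - p) / p);
          x2 = min (real m) (real s2 * (1 - p) / p)
      in integral\<^sup>L (est_measure t1 r1 \<Otimes>\<^sub>M est_measure t2 r2)
           (\<lambda>z. if fst z > snd z then worst_ratio m True x1 r1 r2 n1 n2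
                 else worst_ratio m False x2 r1 r2 n1 n2))"

text \<open>Competitive ratio: infimum over the adversary's (h, l) of the expectation over
  sampling s1 ~ Bin(h,p), s2 ~ Bin(l,p).\<close>
definition comp_ratio :: "nat \<Rightarrow> nat \<Rightarrow> real \<Rightarrow> real \<Rightarrow> real \<Rightarrow> real" where
  "comp_ratio m mt p r1 r2 =
     (INF hl \<in> (UNIV :: (nat \<times> nat) set).
        measure_pmf.expectation (pair_pmf (binomial_pmf (fst hl) p) (binomial_pmf (snd hl) p))
          (\<lambda>s. alg_value m mt p r1 r2 (fst hl) (snd hl) (fst s) (snd s)))"

end

(* Write C = 2 + 2 r1 / r2.  Against every arrival order, the protection level policy for the
   better type with level x loses at most C (|x - min n m| + 1) / m, where n is the number of
   unsampled agents of that type; protecting the worse type costs at most C min(n1, n2) / m more.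
   The level s (1 - p) / p estimates n with mean error O(sqrt m / p) by the second binomial moment,
   and the test estimates of r1 and r2 are misordered with probability exponentially small
   (Hoeffding) in the number of tested agents, which is at least min(s, m_t / 2).  As
   m_t = omega(sqrt m), the expected loss is O(1 / sqrt m).
   Conversely, let the adversary send m^2 type-2 agents before about p m type-1 agents.  Whichever
   type is protected, each unsampled type-1 agent above the level x is lost to a type-2 agent, and
   the expected shortfall E (n1 - x)^+ is of order sqrt m, by the second and fourth binomial
   moments. *)

theory Submission
  imports Defs
begin

section \<open>The protection level policy\<close>

abbreviation num_type1 :: "bool list \<Rightarrow> nat" where
  "num_type1 ts \<equiv> length (filter (\<lambda>t. t) ts)"

abbreviation num_type2 :: "bool list \<Rightarrow> nat" where
  "num_type2 ts \<equiv> length (filter Not ts)"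

lemma num_type1_map_Not: "length (filter ((\<lambda>t. t) \<circ> Not) ts) = num_type2 ts"
  and num_type2_map_Not: "length (filter (Not \<circ> Not) ts) = num_type1 ts"
  by (induction ts) auto

lemma prot_run_append:
  "prot_run m i x (xs @ ys) a = prot_run m i x ys (prot_run m i x xs a)"
  by (induction xs arbitrary: a) (auto simp: Let_def split: prod.splits)

lemma prot_run_saturated: "a1 + a2 = m \<Longrightarrow> prot_run m i x ts (a1, a2) = (a1, a2)"
  by (induction ts) (auto simp: Let_def)

lemma prot_run_bounds:
  assumes "prot_run m i x ts (a1, a2) = (b1, b2)" "a1 + a2 \<le> m"
  shows "a1 \<le> b1" "b1 \<le> a1 + num_type1 ts" "a2 \<le> b2" "b2 \<le> a2 + num_type2 ts" "b1 + b2 \<le> m"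
proof -
  have "a1 \<le> b1 \<and> b1 \<le> a1 + num_type1 ts \<and> a2 \<le> b2 \<and> b2 \<le> a2 + num_type2 ts \<and> b1 + b2 \<le> m"
    using assms
  proof (induction ts arbitrary: a1 a2)
    case (Cons t ts)
    show ?case
    proof (cases t)
      case True
      then show ?thesis using Cons.prems Cons.IH[of "Suc a1" a2] Cons.IH[of a1 a2]
        by (auto simp: Let_def split: if_splits)
    next
      case False
      then show ?thesis using Cons.prems Cons.IH[of a1 "Suc a2"] Cons.IH[of a1 a2]
        by (auto simp: Let_def split: if_splits)
    qed
  qed simp
  then show "a1 \<le> b1" "b1 \<le> a1 + num_type1 ts" "a2 \<le> b2" "b2 \<le> a2 + num_type2 ts" "b1 + b2 \<le> m"
    by auto
qed

lemma prot_run_True_serves_type1: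
  assumes "prot_run m True x ts (a1, a2) = (b1, b2)" "a1 + a2 \<le> m"
  shows "b1 + b2 = m \<or> b1 = a1 + num_type1 ts"
  using assms
proof (induction ts arbitrary: a1 a2)
  case (Cons t ts)
  show ?case
  proof (cases "a1 + a2 < m")
    case True
    then show ?thesis
      using Cons.prems Cons.IH[of "Suc a1" a2] Cons.IH[of a1 a2] Cons.IH[of a1 "Suc a2"]
      by (cases t) (auto simp: Let_def split: if_splits)
  next
    case False
    then show ?thesis using Cons.prems prot_run_saturated[of a1 a2 m True x ts] by auto
  qed
qed simp

lemma prot_run_True_type2_below:
  assumes "prot_run m True x ts (a1, a2) = (b1, b2)" "real a2 < real m - x + 1"
  shows "real b2 < real m - x + 1"
  using assms
proof (induction ts arbitrary: a1 a2)
  case (Cons t ts)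
  then show ?case
    using Cons.IH[of "Suc a1" a2] Cons.IH[of a1 a2] Cons.IH[of a1 "Suc a2"]
    by (cases t) (auto simp: Let_def split: if_splits)
qed simp

lemma prot_run_True_serves_type2:
  assumes "prot_run m True x ts (a1, a2) = (b1, b2)" "a1 + a2 \<le> m"
  shows "b1 + b2 = m \<or> b2 = a2 + num_type2 ts \<or> real m - x \<le> real b2"
  using assms
proof (induction ts arbitrary: a1 a2)
  case (Cons t ts)
  consider "a1 + a2 = m" | "a1 + a2 < m" "t" | "a1 + a2 < m" "\<not> t" "real a2 < real m - x"
    | "a1 + a2 < m" "\<not> t" "real m - x \<le> real a2"
    using Cons.prems(2) by linarith
  then show ?case
  proof cases
    case 1
    then show ?thesis using Cons.prems prot_run_saturated[of a1 a2 m True x ts] by auto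
  next
    case 2
    then show ?thesis using Cons.prems Cons.IH[of "Suc a1" a2] by (auto simp: Let_def)
  next
    case 3
    then show ?thesis using Cons.prems Cons.IH[of a1 "Suc a2"] by (auto simp: Let_def)
  next
    case 4
    then have "prot_run m True x ts (a1, a2) = (b1, b2)" using Cons.prems by (auto simp: Let_def)
    then show ?thesis using 4 prot_run_bounds(3)[of m True x ts a1 a2 b1 b2] Cons.prems(2) by auto
  qed
qed simp

lemma prot_run_False_eq_swap:
  "prot_run m False x ts (a1, a2) = prod.swap (prot_run m True x (map Not ts) (a2, a1))"
proof (induction ts arbitrary: a1 a2)
  case (Cons t ts)
  then show ?case by (cases t) (auto simp: Let_def add.commute)
qed simp

lemma prot_run_False_swapped:
  "prot_run m False x ts (a1, a2) = (b1, b2) \<Longrightarrow> prot_run m True x (map Not ts) (a2, a1) = (b2, b1)"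
  by (cases "prot_run m True x (map Not ts) (a2, a1)") (simp add: prot_run_False_eq_swap)

lemma prot_run_False_bounds:
  assumes "prot_run m False x ts (a1, a2) = (b1, b2)" "a1 + a2 \<le> m"
  shows "b1 \<le> a1 + num_type1 ts" "b2 \<le> a2 + num_type2 ts" "b1 + b2 \<le> m"
  using prot_run_bounds[OF prot_run_False_swapped[OF assms(1)]] assms(2)
  by (simp_all add: num_type1_map_Not num_type2_map_Not)

lemma prot_run_False_serves_type2:
  assumes "prot_run m False x ts (a1, a2) = (b1, b2)" "a1 + a2 \<le> m"
  shows "b1 + b2 = m \<or> b2 = a2 + num_type2 ts"
  using prot_run_True_serves_type1[OF prot_run_False_swapped[OF assms(1)]] assms(2)
  by (simp add: num_type1_map_Not add.commute)

lemma prot_run_False_serves_type1: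
  assumes "prot_run m False x ts (a1, a2) = (b1, b2)" "a1 + a2 \<le> m"
  shows "b1 + b2 = m \<or> b1 = a1 + num_type1 ts \<or> real m - x \<le> real b1"
  using prot_run_True_serves_type2[OF prot_run_False_swapped[OF assms(1)]] assms(2)
  by (simp add: num_type2_map_Not add.commute)

section \<open>Competitive ratio of a protection level policy\<close>

lemma ratio_ge_of_loss_le:
  fixes REW OPT E :: real
  assumes "0 \<le> OPT" "0 \<le> E" "OPT - REW \<le> E * OPT"
  shows "1 - E \<le> ratio REW OPT"
proof (cases "OPT = 0")
  case False
  then have "0 < OPT" using assms(1) by simp
  have "1 - E = (OPT - E * OPT) / OPT" using \<open>0 < OPT\<close> by (simp add: field_simps)
  also have "\<dots> \<le> REW / OPT" using assms \<open>0 < OPT\<close> by (intro divide_right_mono) auto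
  finally show ?thesis using False by (simp add: ratio_def)
qed (use assms in \<open>simp add: ratio_def\<close>)

lemma opt_val_nonneg: "0 \<le> r1 \<Longrightarrow> 0 \<le> r2 \<Longrightarrow> 0 \<le> opt_val m r1 r2 n1 n2"
  unfolding opt_val_def by simp

lemma min_add_min_diff: "min n1 m + min n2 (m - n1) = min (n1 + n2) (m :: nat)"
  by (cases "n1 \<le> m") (auto simp: min_def)

lemma opt_val_ge:
  assumes "0 \<le> r2" "r2 \<le> r1"
  shows "r2 * real (min (n1 + n2) m) \<le> opt_val m r1 r2 n1 n2"
proof -
  have "real (min (n1 + n2) m) = real (min n1 m) + real (min n2 (m - n1))"
    by (simp only: min_add_min_diff[symmetric] of_nat_add)
  moreover have "r2 * min n1 m \<le> r1 * min n1 m" using assms by (simp add: mult_right_mono)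
  ultimately show ?thesis unfolding opt_val_def by (simp only: distrib_left)
qed

text \<open>The constant \<open>C = 2 + 2 r1 / r2\<close> satisfies \<open>C r2 / 2 \<ge> r1\<close> and \<open>C / 2 \<ge> 1\<close>;
  these settle the second and the third alternative of \<open>scale\<close>.\<close>

lemma ratio_ge_of_loss:
  fixes REW \<delta> r1 r2 :: real and m n1 n2 :: nat
  defines "OPT \<equiv> opt_val m r1 r2 n1 n2"
  assumes r: "0 < r2" "r2 < r1" and m: "0 < m" and nonneg: "0 \<le> REW" "0 \<le> \<delta>"
    and loss: "OPT - REW \<le> r1 * \<delta>"
    and scale: "OPT \<le> REW \<or> m \<le> 2 * (n1 + n2) \<or> m \<le> 2 * \<delta>"
  shows "1 - (2 + 2 * r1 / r2) * \<delta> / m \<le> ratio REW OPT"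
proof (rule ratio_ge_of_loss_le)
  define C where "C = 2 + 2 * r1 / r2"
  have C2: "2 \<le> C" and Cr: "r1 \<le> C * r2 / 2" unfolding C_def using r by (simp_all add: field_simps)
  show OPT0: "0 \<le> OPT" unfolding OPT_def using r by (simp add: opt_val_nonneg)
  show E0: "0 \<le> (2 + 2 * r1 / r2) * \<delta> / m" using C2 nonneg unfolding C_def by simp
  from scale show "OPT - REW \<le> (2 + 2 * r1 / r2) * \<delta> / m * OPT"
  proof (elim disjE)
    assume "OPT \<le> REW"
    moreover have "0 \<le> (2 + 2 * r1 / r2) * \<delta> / m * OPT" by (rule mult_nonneg_nonneg[OF E0 OPT0])
    ultimately show ?thesis by linarith
  next
    assume "m \<le> 2 * (n1 + n2)"
    then have "m \<le> 2 * min (n1 + n2) m" by (simp add: min_def)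
    then have "r2 * m / 2 \<le> r2 * min (n1 + n2) m" using r by (simp add: mult_left_mono)
    also have "\<dots> \<le> OPT" unfolding OPT_def using r by (intro opt_val_ge) auto
    finally have big: "r2 * m / 2 \<le> OPT" .
    have "OPT - REW \<le> (C * r2 / 2) * \<delta>" using loss Cr nonneg by (meson mult_right_mono order_trans)
    also have "\<dots> = C * \<delta> / m * (r2 * m / 2)" using m by simp
    also have "\<dots> \<le> C * \<delta> / m * OPT" using big C2 nonneg by (intro mult_left_mono) auto
    finally show ?thesis unfolding C_def .
  next
    assume "m \<le> 2 * \<delta>"
    moreover have "2 * \<delta> \<le> C * \<delta>" using C2 nonneg by (simp add: mult_right_mono)
    ultimately have "m \<le> C * \<delta>" by linarith
    then have "1 \<le> C * \<delta> / m" using m by simp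
    then have "OPT \<le> C * \<delta> / m * OPT" using mult_right_mono[OF _ OPT0] by fastforce
    then show ?thesis using nonneg unfolding C_def by linarith
  qed
qed

lemma opt_val_loss_full:
  fixes b1 b2 n1 n2 m :: nat and r1 r2 \<delta> :: real
  assumes r: "0 \<le> r2" "r2 \<le> r1" and b1: "b1 \<le> n1" and full: "b1 + b2 = m"
    and \<delta>: "real (min n1 m) - b1 \<le> \<delta>"
  shows "opt_val m r1 r2 n1 n2 - (r1 * b1 + r2 * b2) \<le> r1 * \<delta>"
proof -
  have "real (min n2 (m - n1)) \<le> real m - real (min n1 m)"
    by (cases "n1 \<le> m") (auto simp: min_def of_nat_diff)
  then have "opt_val m r1 r2 n1 n2 \<le> r1 * min n1 m + r2 * (real m - min n1 m)"
    unfolding opt_val_def using r by (simp add: mult_left_mono)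
  moreover have "r1 * b1 + r2 * b2 = r1 * b1 + r2 * (real m - b1)" using full by (simp flip: of_nat_add)
  ultimately have "opt_val m r1 r2 n1 n2 - (r1 * b1 + r2 * b2) \<le> (r1 - r2) * (real (min n1 m) - b1)"
    by (simp add: algebra_simps)
  also have "\<dots> \<le> (r1 - r2) * \<delta>" using r \<delta> by (simp add: mult_left_mono)
  also have "\<dots> \<le> r1 * \<delta>" using r b1 full \<delta> by (simp add: mult_right_mono)
  finally show ?thesis .
qed

lemma ratio_protect_type1_ge:
  fixes b1 b2 n1 n2 m :: nat and x r1 r2 :: real
  assumes r: "0 < r2" "r2 < r1" and m: "0 < m"
    and b: "b1 \<le> n1" "b2 \<le> n2" "b1 + b2 \<le> m"
    and served1: "b1 + b2 = m \<or> b1 = n1"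
    and below2: "real b2 < real m - x + 1"
    and served2: "b1 + b2 = m \<or> b2 = n2 \<or> real m - x \<le> real b2"
  shows "1 - (2 + 2 * r1 / r2) * (\<bar>x - real (min n1 m)\<bar> + 1) / m
           \<le> ratio (r1 * b1 + r2 * b2) (opt_val m r1 r2 n1 n2)"
proof (rule ratio_ge_of_loss[OF r m])
  define OPT REW d where "OPT = opt_val m r1 r2 n1 n2" and "REW = r1 * b1 + r2 * b2"
    and "d = \<bar>x - real (min n1 m)\<bar>"
  show "0 \<le> REW" "0 \<le> d + 1" using r unfolding REW_def d_def by simp_all
  have "OPT - REW \<le> r1 * (d + 1) \<and> (OPT \<le> REW \<or> m \<le> 2 * (n1 + n2) \<or> m \<le> 2 * (d + 1))"
  proof (cases "b1 + b2 = m")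
    case True
    have "real (min n1 m) - b1 \<le> d + 1" using below2 True unfolding d_def by linarith
    then have "OPT - REW \<le> r1 * (d + 1)"
      using opt_val_loss_full[OF _ _ b(1) True] r unfolding OPT_def REW_def by simp
    moreover have "m \<le> 2 * (n1 + n2)" using True b by arith
    ultimately show ?thesis by blast
  next
    case False
    with served1 b have b1: "b1 = n1" and "n1 < m" by auto
    define Bo where "Bo = real (min n2 (m - n1))"
    have Bo: "Bo \<le> n2" "Bo \<le> real m - n1" unfolding Bo_def using \<open>n1 < m\<close> by auto
    have loss: "OPT - REW = r2 * (Bo - b2)"
      unfolding OPT_def REW_def opt_val_def Bo_def b1 using \<open>n1 < m\<close> by (simp add: algebra_simps)
    have no_loss: "OPT \<le> REW" if "Bo \<le> b2"
    proof -
      have "r2 * (Bo - b2) \<le> 0" using that r by (simp add: mult_nonneg_nonpos)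
      then show ?thesis using loss by linarith
    qed
    consider "b2 = n2" | "real m - x \<le> real b2" using served2 False by auto
    then show ?thesis
    proof cases
      case 1
      then have "OPT \<le> REW" using Bo no_loss by simp
      moreover have "0 \<le> r1 * (d + 1)" using r unfolding d_def by simp
      ultimately show ?thesis by auto
    next
      case 2
      have "OPT - REW \<le> r2 * (x - n1)" using loss 2 Bo r by (simp add: mult_left_mono)
      also have "\<dots> \<le> r2 * d" using r \<open>n1 < m\<close> unfolding d_def by (simp add: mult_left_mono)
      also have "\<dots> \<le> r1 * (d + 1)" using r unfolding d_def by (simp add: mult_mono)
      finally have "OPT - REW \<le> r1 * (d + 1)" .
      moreover have "Bo \<le> b2 \<or> m \<le> 2 * (n1 + n2) \<or> m \<le> 2 * (d + 1)"
        using 2 Bo abs_ge_self[of "x - n1"] \<open>n1 < m\<close> unfolding d_def by auto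
      ultimately show ?thesis using no_loss by blast
    qed
  qed
  then show "OPT - REW \<le> r1 * (d + 1)" "OPT \<le> REW \<or> m \<le> 2 * (n1 + n2) \<or> m \<le> 2 * (d + 1)"
    by auto
qed

lemma ratio_protect_type2_ge:
  fixes b1 b2 n1 n2 m :: nat and x r1 r2 :: real
  assumes r: "0 < r2" "r2 < r1" and m: "0 < m"
    and b: "b1 \<le> n1" "b2 \<le> n2" "b1 + b2 \<le> m"
    and served2: "b1 + b2 = m \<or> b2 = n2"
    and served1: "b1 + b2 = m \<or> b1 = n1 \<or> real m - x \<le> real b1"
  shows "1 - (2 + 2 * r1 / r2) * (real (min n1 n2) + \<bar>x - real (min n2 m)\<bar> + 1) / m
           \<le> ratio (r1 * b1 + r2 * b2) (opt_val m r1 r2 n1 n2)"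
proof (rule ratio_ge_of_loss[OF r m])
  define OPT REW d \<mu> where "OPT = opt_val m r1 r2 n1 n2" and "REW = r1 * b1 + r2 * b2"
    and "d = \<bar>x - real (min n2 m)\<bar>" and "\<mu> = real (min n1 n2)"
  show "0 \<le> REW" "0 \<le> \<mu> + d + 1" using r unfolding REW_def d_def \<mu>_def by simp_all
  have "OPT - REW \<le> r1 * (\<mu> + d + 1) \<and> (OPT \<le> REW \<or> m \<le> 2 * (n1 + n2) \<or> m \<le> 2 * (\<mu> + d + 1))"
  proof (cases "b1 + b2 = m")
    case True
    have "real (min n1 m) - b1 \<le> \<mu> + d + 1" using True b unfolding d_def \<mu>_def by auto
    then have "OPT - REW \<le> r1 * (\<mu> + d + 1)"
      using opt_val_loss_full[OF _ _ b(1) True] r unfolding OPT_def REW_def by simp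
    moreover have "m \<le> 2 * (n1 + n2)" using True b by arith
    ultimately show ?thesis by blast
  next
    case False
    with served2 b have b2: "b2 = n2" and "b1 + n2 < m" by auto
    have "OPT \<le> r1 * min n1 m + r2 * n2" unfolding OPT_def opt_val_def using r by (simp add: mult_left_mono)
    then have loss: "OPT - REW \<le> r1 * (real (min n1 m) - b1)" unfolding REW_def b2 by (simp add: algebra_simps)
    consider "b1 = n1" | "b1 < n1" "real m - x \<le> real b1" using served1 False b by force
    then show ?thesis
    proof cases
      case 1
      have "r1 * (real (min n1 m) - b1) \<le> 0" using 1 r by (simp add: mult_nonneg_nonpos)
      then have "OPT \<le> REW" using loss by linarith
      moreover have "0 \<le> r1 * (\<mu> + d + 1)" using r unfolding d_def \<mu>_def by simp
      ultimately show ?thesis by auto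
    next
      case 2
      have "real (min n1 m) - b1 \<le> \<mu> + d" using 2 \<open>b1 + n2 < m\<close> unfolding d_def \<mu>_def by auto
      then have "r1 * (real (min n1 m) - b1) \<le> r1 * (\<mu> + d + 1)" using r by (simp add: mult_left_mono)
      moreover have "m \<le> 2 * (n1 + n2) \<or> m \<le> 2 * (\<mu> + d + 1)"
        using 2 abs_ge_self[of "x - n2"] \<open>b1 + n2 < m\<close> unfolding d_def \<mu>_def by auto
      ultimately show ?thesis using loss by auto
    qed
  qed
  then show "OPT - REW \<le> r1 * (\<mu> + d + 1)"
    "OPT \<le> REW \<or> m \<le> 2 * (n1 + n2) \<or> m \<le> 2 * (\<mu> + d + 1)"
    by auto
qed

lemma orders_counts: "I \<in> orders n1 n2 \<Longrightarrow> num_type1 I = n1 \<and> num_type2 I = n2"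
  unfolding orders_def by simp

lemma type2_first_in_orders: "replicate n2 False @ replicate n1 True \<in> orders n1 n2"
  unfolding orders_def by simp

lemma ratio_nonneg: "0 \<le> rew \<Longrightarrow> 0 \<le> opt \<Longrightarrow> 0 \<le> ratio rew opt"
  unfolding ratio_def by simp

lemma prot_reward_nonneg: "0 \<le> r1 \<Longrightarrow> 0 \<le> r2 \<Longrightarrow> 0 \<le> prot_reward m i x r1 r2 I"
  unfolding prot_reward_def by (auto split: prod.splits)

lemma reward_le_opt_val:
  fixes b1 b2 n1 n2 m :: nat and r1 r2 :: real
  assumes r: "0 \<le> r2" "r2 \<le> r1" and b: "b1 \<le> n1" "b2 \<le> n2" "b1 + b2 \<le> m"
  shows "r1 * b1 + r2 * b2 \<le> opt_val m r1 r2 n1 n2"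
proof -
  consider "m \<le> n1" | "n1 < m" "b2 \<le> m - n1" | "n1 < m" "m - n1 < b2" by linarith
  then show ?thesis
  proof cases
    case 1
    have "r1 * b1 + r2 * b2 \<le> r1 * (b1 + b2)" using r by (simp add: distrib_left mult_right_mono)
    also have "\<dots> \<le> r1 * m" using r b by (simp add: mult_left_mono flip: of_nat_add)
    finally show ?thesis using 1 unfolding opt_val_def by simp
  next
    case 2
    have "r1 * b1 \<le> r1 * min n1 m" using r b by (intro mult_left_mono) auto
    moreover have "r2 * b2 \<le> r2 * min n2 (m - n1)" using r b 2 by (intro mult_left_mono) auto
    ultimately show ?thesis unfolding opt_val_def by linarith
  next
    case 3
    then have "opt_val m r1 r2 n1 n2 = r1 * n1 + r2 * (real m - n1)"
      using b unfolding opt_val_def by (simp add: of_nat_diff min_def)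
    moreover have "(r1 - r2) * (real m - n1) \<le> (r1 - r2) * b2" using 3 r by (intro mult_left_mono) auto
    moreover have "r1 * b1 \<le> r1 * (real m - b2)" using r b by (intro mult_left_mono) auto
    ultimately show ?thesis by (simp add: algebra_simps)
  qed
qed

lemma ratio_le_one: "rew \<le> opt \<Longrightarrow> 0 \<le> opt \<Longrightarrow> ratio rew opt \<le> 1"
  unfolding ratio_def by (auto simp: divide_le_eq)

lemma ratio_prot_reward_le_one:
  assumes r: "0 \<le> r2" "r2 \<le> r1" and I: "I \<in> orders n1 n2"
  shows "ratio (prot_reward m i x r1 r2 I) (opt_val m r1 r2 n1 n2) \<le> 1"
proof -
  obtain b1 b2 where run: "prot_run m i x I (0, 0) = (b1, b2)" by fastforce
  have "b1 \<le> n1" "b2 \<le> n2" "b1 + b2 \<le> m" using prot_run_bounds[OF run] orders_counts[OF I] by auto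
  then show ?thesis unfolding prot_reward_def run using r
    by (simp add: ratio_le_one reward_le_opt_val opt_val_nonneg)
qed

lemma worst_ratio_le:
  assumes r: "0 \<le> r1" "0 \<le> r2" and I: "I \<in> orders n1 n2"
  shows "worst_ratio m i x r1 r2 n1 n2 \<le> ratio (prot_reward m i x r1 r2 I) (opt_val m r1 r2 n1 n2)"
  unfolding worst_ratio_def
proof (rule cINF_lower[OF _ I])
  show "bdd_below ((\<lambda>I. ratio (prot_reward m i x r1 r2 I) (opt_val m r1 r2 n1 n2)) ` orders n1 n2)"
    using r by (intro bdd_belowI[of _ 0]) (auto intro!: ratio_nonneg prot_reward_nonneg opt_val_nonneg)
qed

lemma worst_ratio_nonneg:
  "0 \<le> r1 \<Longrightarrow> 0 \<le> r2 \<Longrightarrow> 0 \<le> worst_ratio m i x r1 r2 n1 n2"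
  unfolding worst_ratio_def using type2_first_in_orders
  by (intro cINF_greatest) (auto intro!: ratio_nonneg prot_reward_nonneg opt_val_nonneg)

lemma worst_ratio_le_one:
  "0 \<le> r2 \<Longrightarrow> r2 \<le> r1 \<Longrightarrow> worst_ratio m i x r1 r2 n1 n2 \<le> 1"
  using worst_ratio_le[OF _ _ type2_first_in_orders] ratio_prot_reward_le_one[OF _ _ type2_first_in_orders]
  by (meson order_trans)

lemma worst_ratio_protect_type1_ge:
  assumes r: "0 < r2" "r2 < r1" and m: "0 < m" and x: "x \<le> real m"
  shows "1 - (2 + 2 * r1 / r2) * (\<bar>x - real (min n1 m)\<bar> + 1) / m \<le> worst_ratio m True x r1 r2 n1 n2"
  unfolding worst_ratio_def
proof (rule cINF_greatest)
  fix I assume I: "I \<in> orders n1 n2"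
  obtain b1 b2 where run: "prot_run m True x I (0, 0) = (b1, b2)" by fastforce
  note counts = orders_counts[OF I]
  show "1 - (2 + 2 * r1 / r2) * (\<bar>x - real (min n1 m)\<bar> + 1) / m
        \<le> ratio (prot_reward m True x r1 r2 I) (opt_val m r1 r2 n1 n2)"
    unfolding prot_reward_def run prod.case
  proof (rule ratio_protect_type1_ge[OF r m])
    show "b1 \<le> n1" "b2 \<le> n2" "b1 + b2 \<le> m" using prot_run_bounds[OF run] counts by auto
    show "b1 + b2 = m \<or> b1 = n1" using prot_run_True_serves_type1[OF run] counts by auto
    show "real b2 < real m - x + 1" using prot_run_True_type2_below[OF run] x by auto
    show "b1 + b2 = m \<or> b2 = n2 \<or> real m - x \<le> real b2"
      using prot_run_True_serves_type2[OF run] counts by auto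
  qed
qed (use type2_first_in_orders in blast)

lemma worst_ratio_protect_type2_ge:
  assumes r: "0 < r2" "r2 < r1" and m: "0 < m"
  shows "1 - (2 + 2 * r1 / r2) * (real (min n1 n2) + \<bar>x - real (min n2 m)\<bar> + 1) / m
           \<le> worst_ratio m False x r1 r2 n1 n2"
  unfolding worst_ratio_def
proof (rule cINF_greatest)
  fix I assume I: "I \<in> orders n1 n2"
  obtain b1 b2 where run: "prot_run m False x I (0, 0) = (b1, b2)" by fastforce
  note counts = orders_counts[OF I]
  show "1 - (2 + 2 * r1 / r2) * (real (min n1 n2) + \<bar>x - real (min n2 m)\<bar> + 1) / m
        \<le> ratio (prot_reward m False x r1 r2 I) (opt_val m r1 r2 n1 n2)"
    unfolding prot_reward_def run prod.case
  proof (rule ratio_protect_type2_ge[OF r m])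
    show "b1 \<le> n1" "b2 \<le> n2" "b1 + b2 \<le> m" using prot_run_False_bounds[OF run] counts by auto
    show "b1 + b2 = m \<or> b2 = n2" using prot_run_False_serves_type2[OF run] counts by auto
    show "b1 + b2 = m \<or> b1 = n1 \<or> real m - x \<le> real b1"
      using prot_run_False_serves_type1[OF run] counts by auto
  qed
qed (use type2_first_in_orders in blast)

lemma ratio_le_of_loss_ge:
  fixes n1 n2 m :: nat and r1 r2 REW L :: real
  assumes r: "0 < r2" "r2 < r1" and m: "0 < m" and n: "n1 \<le> m" "m \<le> n2"
    and L: "0 \<le> L" "L \<le> opt_val m r1 r2 n1 n2 - REW"
  shows "ratio REW (opt_val m r1 r2 n1 n2) \<le> 1 - L / (r1 * m)"
proof -
  define OPT where "OPT = opt_val m r1 r2 n1 n2"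
  have OPT: "OPT = r1 * n1 + r2 * (real m - n1)" unfolding OPT_def opt_val_def using n
    by (simp add: of_nat_diff)
  have "r2 * (real m - n1) \<le> r1 * (real m - n1)" using r n by (intro mult_right_mono) auto
  then have "OPT \<le> r1 * m" unfolding OPT by (simp add: algebra_simps)
  moreover have "r2 * n1 \<le> r1 * n1" using r by (intro mult_right_mono) auto
  then have "r2 * m \<le> OPT" unfolding OPT by (simp add: algebra_simps)
  moreover have "0 < r2 * m" using r m by simp
  ultimately have "0 < OPT" "L / (r1 * m) \<le> L / OPT" using L by (auto intro: divide_left_mono)
  moreover have "L / OPT \<le> (OPT - REW) / OPT" using \<open>0 < OPT\<close> L by (intro divide_right_mono) (auto simp: OPT_def)
  ultimately show ?thesis unfolding ratio_def OPT_def[symmetric] by (simp add: diff_divide_distrib)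
qed

text \<open>The adversary sends all type-2 agents first.  Protecting type 1 then wastes the
  \<open>n1 - x\<close> units left over by the type-1 agents; protecting type 2 gives everything to type 2.\<close>

lemma worst_ratio_protect_type1_le:
  assumes r: "0 < r2" "r2 < r1" and m: "0 < m" and n: "n1 \<le> m" "m \<le> n2"
    and x: "0 \<le> x" "x \<le> real m"
  shows "worst_ratio m True x r1 r2 n1 n2 \<le> 1 - (r1 - r2) * max 0 (real n1 - x) / (r1 * m)"
proof -
  define I where "I = replicate n2 False @ replicate n1 True"
  obtain c1 K where run2: "prot_run m True x (replicate n2 False) (0, 0) = (c1, K)" by fastforce
  obtain b1 b2 where run1: "prot_run m True x (replicate n1 True) (c1, K) = (b1, b2)" by fastforce
  have "c1 = 0" "K \<le> m" using prot_run_bounds[OF run2] by auto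
  have K: "real m - x \<le> real K" "real K < real m - x + 1"
    using prot_run_True_serves_type2[OF run2] prot_run_True_type2_below[OF run2] \<open>c1 = 0\<close> n x by auto
  have b: "b2 = K" "b1 \<le> n1" "b1 + K \<le> m" using prot_run_bounds[OF run1] \<open>c1 = 0\<close> \<open>K \<le> m\<close> by auto
  have served1: "b1 + K = m \<or> b1 = n1" using prot_run_True_serves_type1[OF run1] \<open>c1 = 0\<close> b by auto
  have run: "prot_run m True x I (0, 0) = (b1, K)" unfolding I_def prot_run_append run2 run1 b(1) ..
  define L where "L = (r1 - r2) * max 0 (real n1 - x)"
  have OPT: "opt_val m r1 r2 n1 n2 = r1 * n1 + r2 * (real m - n1)" unfolding opt_val_def using n
    by (simp add: of_nat_diff)
  have "L \<le> opt_val m r1 r2 n1 n2 - (r1 * b1 + r2 * K)"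
    using served1
  proof
    assume full: "b1 + K = m"
    then have b1: "real b1 = real m - K" by (simp flip: of_nat_add)
    have "opt_val m r1 r2 n1 n2 - (r1 * b1 + r2 * K) = (r1 - r2) * (real n1 - real m + K)"
      unfolding OPT b1 by (simp add: algebra_simps)
    moreover have "max 0 (real n1 - x) \<le> real n1 - real m + K" using K b full by auto
    ultimately show ?thesis unfolding L_def using r by (simp add: mult_left_mono)
  next
    assume "b1 = n1"
    then have "L = 0" and "0 \<le> real m - n1 - K" using K b unfolding L_def by auto
    moreover have "opt_val m r1 r2 n1 n2 - (r1 * b1 + r2 * K) = r2 * (real m - n1 - K)"
      unfolding OPT \<open>b1 = n1\<close> by (simp add: algebra_simps)
    ultimately show ?thesis using r by simp
  qed
  then have "ratio (prot_reward m True x r1 r2 I) (opt_val m r1 r2 n1 n2) \<le> 1 - L / (r1 * m)"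
    unfolding prot_reward_def run using r by (intro ratio_le_of_loss_ge[OF r m n]) (auto simp: L_def)
  moreover have "worst_ratio m True x r1 r2 n1 n2
      \<le> ratio (prot_reward m True x r1 r2 I) (opt_val m r1 r2 n1 n2)"
    unfolding I_def using r by (intro worst_ratio_le type2_first_in_orders) auto
  ultimately show ?thesis unfolding L_def by linarith
qed

lemma worst_ratio_protect_type2_le:
  assumes r: "0 < r2" "r2 < r1" and m: "0 < m" and n: "n1 \<le> m" "m \<le> n2"
  shows "worst_ratio m False x r1 r2 n1 n2 \<le> 1 - (r1 - r2) * real n1 / (r1 * m)"
proof -
  define I where "I = replicate n2 False @ replicate n1 True"
  obtain c1 K where run2: "prot_run m False x (replicate n2 False) (0, 0) = (c1, K)" by fastforce
  have "c1 = 0" "K = m"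
    using prot_run_False_bounds[OF run2] prot_run_False_serves_type2[OF run2] n by auto
  then have run: "prot_run m False x I (0, 0) = (0, m)"
    unfolding I_def prot_run_append run2 by (simp add: prot_run_saturated)
  have OPT: "opt_val m r1 r2 n1 n2 = r1 * n1 + r2 * (real m - n1)" unfolding opt_val_def using n
    by (simp add: of_nat_diff)
  have "ratio (prot_reward m False x r1 r2 I) (opt_val m r1 r2 n1 n2) \<le> 1 - (r1 - r2) * n1 / (r1 * m)"
    unfolding prot_reward_def run using r
    by (intro ratio_le_of_loss_ge[OF r m n]) (auto simp: OPT algebra_simps mult_right_mono)
  moreover have "worst_ratio m False x r1 r2 n1 n2
      \<le> ratio (prot_reward m False x r1 r2 I) (opt_val m r1 r2 n1 n2)"
    unfolding I_def using r by (intro worst_ratio_le type2_first_in_orders) auto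
  ultimately show ?thesis by linarith
qed

section \<open>Binomial moments\<close>

text \<open>A closed form of the binomial expectation, valid for all \<open>p\<close>; its recursion in \<open>n\<close> yields the
  central moments.\<close>

definition binomial_expect :: "real \<Rightarrow> nat \<Rightarrow> (nat \<Rightarrow> real) \<Rightarrow> real" where
  "binomial_expect p n f = (\<Sum>k\<le>n. real (n choose k) * p ^ k * (1 - p) ^ (n - k) * f k)"

lemma expectation_binomial_pmf_eq:
  "p \<in> {0..1} \<Longrightarrow> measure_pmf.expectation (binomial_pmf n p) f = binomial_expect p n f"
  unfolding binomial_expect_def by (subst expectation_binomial_pmf') auto

lemma binomial_expect_cong:
  "(\<And>k. k \<le> n \<Longrightarrow> f k = g k) \<Longrightarrow> binomial_expect p n f = binomial_expect p n g"
  unfolding binomial_expect_def by (intro sum.cong) auto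

lemma binomial_expect_add: "binomial_expect p n (\<lambda>k. f k + g k) = binomial_expect p n f + binomial_expect p n g"
  unfolding binomial_expect_def by (simp add: sum.distrib algebra_simps)

lemma binomial_expect_diff: "binomial_expect p n (\<lambda>k. f k - g k) = binomial_expect p n f - binomial_expect p n g"
  unfolding binomial_expect_def by (simp add: sum_subtractf algebra_simps)

lemma binomial_expect_cmult: "binomial_expect p n (\<lambda>k. c * f k) = c * binomial_expect p n f"
  unfolding binomial_expect_def by (simp add: sum_distrib_left algebra_simps)

lemma binomial_expect_const: "binomial_expect p n (\<lambda>k. c) = c"
proof -
  have "(\<Sum>k\<le>n. real (n choose k) * p ^ k * (1 - p) ^ (n - k)) = (p + (1 - p)) ^ n"
    by (subst binomial_ring) (simp add: atLeast0AtMost mult.commute mult.left_commute)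
  then show ?thesis unfolding binomial_expect_def by (simp flip: sum_distrib_right)
qed

lemma binomial_expect_mono:
  "p \<in> {0..1} \<Longrightarrow> (\<And>k. k \<le> n \<Longrightarrow> f k \<le> g k) \<Longrightarrow>
    binomial_expect p n f \<le> binomial_expect p n g"
  unfolding binomial_expect_def by (intro sum_mono mult_left_mono) auto

lemma binomial_expect_Suc:
  "binomial_expect p (Suc n) f = binomial_expect p n (\<lambda>k. p * f (Suc k) + (1 - p) * f k)"
proof -
  define q where "q = 1 - p"
  define T where "T k = real (n choose k) * p ^ k * q ^ (n - k)" for k
  define S1 where "S1 = (\<Sum>k\<le>n. p * T k * f (Suc k))"
  define S2 where "S2 = (\<Sum>k\<le>n. real (n choose Suc k) * p ^ Suc k * q ^ (n - k) * f (Suc k))"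
  have "binomial_expect p (Suc n) f
      = q ^ Suc n * f 0 + (\<Sum>k\<le>n. real (Suc n choose Suc k) * p ^ Suc k * q ^ (n - k) * f (Suc k))"
    unfolding binomial_expect_def q_def by (subst sum.atMost_Suc_shift) simp
  also have "\<dots> = S1 + (q ^ Suc n * f 0 + S2)"
    unfolding S1_def S2_def T_def by (simp add: sum.distrib algebra_simps)
  also have "q ^ Suc n * f 0 + S2 = (\<Sum>k\<le>Suc n. real (n choose k) * p ^ k * q ^ (Suc n - k) * f k)"
    unfolding S2_def by (subst sum.atMost_Suc_shift) simp
  also have "\<dots> = (\<Sum>k\<le>n. q * T k * f k)"
    unfolding T_def by (simp add: Suc_diff_le algebra_simps)
  also have "S1 + (\<Sum>k\<le>n. q * T k * f k) = binomial_expect p n (\<lambda>k. p * f (Suc k) + (1 - p) * f k)"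
    unfolding S1_def binomial_expect_def T_def q_def sum.distrib[symmetric]
    by (intro sum.cong refl) (simp add: algebra_simps)
  finally show ?thesis .
qed

lemma binomial_expect_central_moment1: "binomial_expect p n (\<lambda>k. real k - n * p) = 0"
proof (induction n)
  case (Suc n)
  have "binomial_expect p (Suc n) (\<lambda>k. real k - Suc n * p) = binomial_expect p n (\<lambda>k. real k - n * p)"
    unfolding binomial_expect_Suc by (intro binomial_expect_cong) (simp add: algebra_simps)
  then show ?case using Suc by simp
qed (simp add: binomial_expect_def)

lemma binomial_expect_central_moment2:
  "binomial_expect p n (\<lambda>k. (real k - n * p)^2) = n * p * (1 - p)"
proof (induction n)
  case (Suc n)
  have "binomial_expect p (Suc n) (\<lambda>k. (real k - Suc n * p)^2)
     = binomial_expect p n (\<lambda>k. (real k - n * p)^2 + p * (1 - p))"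
    unfolding binomial_expect_Suc by (intro binomial_expect_cong) (simp add: algebra_simps power2_eq_square)
  also have "\<dots> = n * p * (1 - p) + p * (1 - p)"
    using Suc by (simp add: binomial_expect_add binomial_expect_const)
  finally show ?case by (simp add: algebra_simps)
qed (simp add: binomial_expect_def)

lemma binomial_expect_central_moment4:
  "binomial_expect p n (\<lambda>k. (real k - n * p)^4)
     = 3 * (n * p * (1 - p))^2 + n * p * (1 - p) * (1 - 6 * p * (1 - p))"
proof (induction n)
  case (Suc n)
  define q where "q = 1 - p"
  have step: "p * (y + q) ^ 4 + q * (y - p) ^ 4
      = y ^ 4 + (6 * p * q * y^2 + (4 * p * q * (q - p) * y + p * q * (1 - 3 * p * q)))" for y
    unfolding q_def by (simp add: algebra_simps power2_eq_square power4_eq_xxxx)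
  have "binomial_expect p (Suc n) (\<lambda>k. (real k - Suc n * p)^4)
     = binomial_expect p n (\<lambda>k. p * ((real k - n * p) + q) ^ 4 + q * ((real k - n * p) - p) ^ 4)"
    unfolding binomial_expect_Suc by (intro binomial_expect_cong) (simp add: q_def algebra_simps)
  also have "\<dots> = (3 * (n * p * q)^2 + n * p * q * (1 - 6 * p * q))
      + (6 * p * q * (n * p * q) + (4 * p * q * (q - p) * 0 + p * q * (1 - 3 * p * q)))"
    unfolding step using Suc binomial_expect_central_moment1[of p n] binomial_expect_central_moment2[of p n]
    by (simp only: binomial_expect_add binomial_expect_cmult binomial_expect_const q_def)
  finally show ?case unfolding q_def by (simp add: algebra_simps power2_eq_square)
qed (simp add: binomial_expect_def)

section \<open>Binomial estimates of the loss terms\<close>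

text \<open>\<open>s (1 - p) / p\<close> estimates the number of unsampled agents of a type with \<open>s\<close> sampled ones.\<close>

definition prot_level :: "nat \<Rightarrow> real \<Rightarrow> nat \<Rightarrow> real" where
  "prot_level m p s = min (real m) (real s * (1 - p) / p)"

lemma prot_level_bounds: "0 < p \<Longrightarrow> p < 1 \<Longrightarrow> 0 \<le> prot_level m p s \<and> prot_level m p s \<le> real m"
  unfolding prot_level_def by auto

lemma abs_min_diff_le: "\<bar>min c u - min c v\<bar> \<le> \<bar>u - v :: real\<bar>"
  by (simp add: min_def abs_if)

lemma abs_le_am_gm: "0 < a \<Longrightarrow> \<bar>y :: real\<bar> \<le> (y^2 / a + a) / 2"
  using sum_squares_bound[of "\<bar>y\<bar>" a] by (simp add: field_simps power2_eq_square)

lemma abs_ge_quartic: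
  fixes y a :: real assumes a: "0 < a"
  shows "3 * y^2 / (2 * a) - y^4 / (2 * a^3) \<le> \<bar>y\<bar>"
proof -
  define t where "t = \<bar>y\<bar>"
  have "0 \<le> t" unfolding t_def by simp
  have "2 * a^3 * t - 3 * a^2 * t^2 + t^4 = t * (t - a)^2 * (t + 2 * a)"
    by (simp add: algebra_simps power2_eq_square power3_eq_cube power4_eq_xxxx)
  also have "\<dots> \<ge> 0" using \<open>0 \<le> t\<close> a by simp
  finally have "3 * t^2 / (2 * a) - t^4 / (2 * a^3) \<le> t" using a
    by (simp add: field_simps power2_eq_square power3_eq_cube power4_eq_xxxx)
  moreover have "y^2 = t^2" "y^4 = t^4" unfolding t_def by (simp_all add: power_even_abs_numeral)
  ultimately show ?thesis unfolding t_def by metis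
qed

text \<open>When \<open>h\<close> is at most of order \<open>m\<close>, the error of the protection level is at most
  \<open>|s - h p| / p\<close>, whose expectation is controlled by the variance \<open>h p (1 - p) = O(m)\<close>.\<close>

lemma binomial_expect_level_error_le_moderate:
  fixes p :: real and m h :: nat
  assumes p: "0 < p" "p < 1" and m: "0 < m" and h: "real h * (1 - p) \<le> 2 * m"
  shows "binomial_expect p h (\<lambda>s. \<bar>prot_level m p s - real (min (h - s) m)\<bar>) \<le> (1 + 1 / p) * sqrt m"
proof -
  define q where "q = 1 - p"
  have pp: "p \<in> {0..1}" and sm: "0 < sqrt m" using p m by auto
  have pointwise: "\<bar>prot_level m p s - real (min (h - s) m)\<bar>
      \<le> (1 / (2 * p * sqrt m)) * (real s - h * p)^2 + sqrt m / (2 * p)" if "s \<le> h" for s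
  proof -
    have "real (min (h - s) m) = min (real m) (real h - real s)" using that by (auto simp: of_nat_diff min_def)
    then have "\<bar>prot_level m p s - real (min (h - s) m)\<bar> \<le> \<bar>real s * q / p - (real h - real s)\<bar>"
      unfolding prot_level_def q_def by (simp add: abs_min_diff_le)
    also have "\<dots> = \<bar>real s - h * p\<bar> / p" using p unfolding q_def by (simp add: field_simps)
    also have "\<dots> \<le> ((real s - h * p)^2 / sqrt m + sqrt m) / 2 / p"
      using abs_le_am_gm[OF sm, of "real s - h * p"] p by (intro divide_right_mono) auto
    finally show ?thesis using p by (simp add: field_simps)
  qed
  have "binomial_expect p h (\<lambda>s. \<bar>prot_level m p s - real (min (h - s) m)\<bar>)
      \<le> binomial_expect p h (\<lambda>s. (1 / (2 * p * sqrt m)) * (real s - h * p)^2 + sqrt m / (2 * p))"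
    using pointwise by (intro binomial_expect_mono pp)
  also have "\<dots> = (1 / (2 * p * sqrt m)) * (h * p * q) + sqrt m / (2 * p)"
    unfolding q_def
    by (simp only: binomial_expect_add binomial_expect_cmult binomial_expect_const binomial_expect_central_moment2)
  also have "(1 / (2 * p * sqrt m)) * (h * p * q) \<le> sqrt m"
  proof -
    have "p * (h * q) \<le> p * (2 * m)" using h p unfolding q_def by (intro mult_left_mono) auto
    then have "(1 / (2 * p * sqrt m)) * (h * p * q) \<le> (1 / (2 * p * sqrt m)) * (2 * p * m)"
      using p sm by (intro mult_left_mono) (auto simp: algebra_simps)
    also have "\<dots> = sqrt m" using p by (simp add: real_div_sqrt)
    finally show ?thesis .
  qed
  also have "sqrt m + sqrt m / (2 * p) \<le> (1 + 1 / p) * sqrt m" using p sm by (simp add: field_simps)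
  finally show ?thesis by simp
qed

lemma prot_level_exact_near_mean:
  fixes p :: real and m h s :: nat
  assumes p: "0 < p" "p < 1" and h: "2 * m < real h * (1 - p)"
    and near: "\<bar>real s - h * p\<bar> < min p (1 - p) * h / 2"
  shows "prot_level m p s = real (min (h - s) m)"
proof -
  have "min p (1 - p) * h \<le> h * p" "min p (1 - p) * h \<le> h * (1 - p)"
    by (metis min.cobounded1 min.cobounded2 mult.commute mult_right_mono of_nat_0_le_iff)+
  then have s: "h * p / 2 < real s" "real s < h * p + h * (1 - p) / 2"
    using near abs_ge_self[of "real s - h * p"] abs_ge_minus_self[of "real s - h * p"] by linarith+
  have "h * p / 2 * (1 - p) \<le> real s * (1 - p)" using s(1) p by (intro mult_right_mono) auto
  moreover have "p * (2 * m) \<le> p * (h * (1 - p))" using h p by (intro mult_left_mono) auto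
  ultimately have "real m \<le> real s * (1 - p) / p" using p by (auto simp: field_simps algebra_simps)
  moreover have "m \<le> h - s" using s(2) h by (simp add: field_simps)
  ultimately show ?thesis unfolding prot_level_def by simp
qed

text \<open>When \<open>h\<close> is large compared with \<open>m\<close>, the error never exceeds \<open>m\<close> and vanishes
  unless \<open>s\<close> deviates from \<open>h p\<close> by a constant fraction of \<open>h\<close>; Chebyshev's inequality
  concludes.\<close>

lemma binomial_expect_level_error_le_large:
  fixes p :: real and m h :: nat
  assumes p: "0 < p" "p < 1" and h: "2 * m < real h * (1 - p)"
  shows "binomial_expect p h (\<lambda>s. \<bar>prot_level m p s - real (min (h - s) m)\<bar>) \<le> 2 / (min p (1 - p))^2"
proof -
  define q where "q = 1 - p"
  define e where "e = min p q * h / 2"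
  have pp: "p \<in> {0..1}" and q: "0 < q" "q < 1" using p unfolding q_def by auto
  have mq: "m < q * h / 2" using h unfolding q_def by (simp add: field_simps)
  have h0: "0 < h" using mq q by (cases h) auto
  have e0: "0 < e" unfolding e_def using h0 p q by simp
  have pointwise: "\<bar>prot_level m p s - real (min (h - s) m)\<bar> \<le> (m / e^2) * (real s - h * p)^2" for s
  proof (cases "\<bar>real s - h * p\<bar> < e")
    case True
    then show ?thesis using prot_level_exact_near_mean[OF p h] unfolding e_def q_def by simp
  next
    case False
    then have "e^2 \<le> (real s - h * p)^2" using e0 by (metis abs_le_square_iff abs_of_pos not_less)
    then have "real m * 1 \<le> real m * ((real s - h * p)^2 / e^2)" using e0 by (intro mult_left_mono) auto
    moreover have "\<bar>prot_level m p s - real (min (h - s) m)\<bar> \<le> m"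
      using prot_level_bounds[OF p, of m s] by auto
    ultimately show ?thesis by simp
  qed
  have "binomial_expect p h (\<lambda>s. \<bar>prot_level m p s - real (min (h - s) m)\<bar>)
      \<le> binomial_expect p h (\<lambda>s. (m / e^2) * (real s - h * p)^2)"
    using pointwise by (intro binomial_expect_mono pp)
  also have "\<dots> = 4 * (m / h) * p * q / (min p q)^2"
    using h0 p q unfolding e_def binomial_expect_cmult binomial_expect_central_moment2 q_def[symmetric]
    by (simp add: field_simps power2_eq_square)
  also have "\<dots> \<le> 4 * (q / 2) * p * q / (min p q)^2"
    using mq h0 p q by (intro divide_right_mono mult_right_mono) (auto simp: field_simps)
  also have "\<dots> \<le> 2 / (min p q)^2"
    using p q mult_mono[of "p * q" 1 q 1] by (intro divide_right_mono) (auto simp: mult_le_one)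
  finally show ?thesis unfolding q_def .
qed

lemma binomial_expect_level_error_le:
  fixes p :: real and m h :: nat
  assumes p: "0 < p" "p < 1" and m: "0 < m"
  shows "binomial_expect p h (\<lambda>s. \<bar>prot_level m p s - real (min (h - s) m)\<bar>)
           \<le> (1 + 1 / p) * sqrt m + 2 / (min p (1 - p))^2"
proof (cases "real h * (1 - p) \<le> 2 * m")
  case True
  then have "binomial_expect p h (\<lambda>s. \<bar>prot_level m p s - real (min (h - s) m)\<bar>) \<le> (1 + 1 / p) * sqrt m"
    by (rule binomial_expect_level_error_le_moderate[OF p m])
  moreover have "0 \<le> 2 / (min p (1 - p))^2" by simp
  ultimately show ?thesis by linarith
next
  case False
  then have "binomial_expect p h (\<lambda>s. \<bar>prot_level m p s - real (min (h - s) m)\<bar>) \<le> 2 / (min p (1 - p))^2"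
    by (intro binomial_expect_level_error_le_large[OF p]) simp
  moreover have "0 \<le> (1 + 1 / p) * sqrt m" using p by simp
  ultimately show ?thesis by linarith
qed

lemma exp_neg_le_inverse: "0 < x \<Longrightarrow> exp (- x) \<le> 1 / (x :: real)"
proof -
  assume "0 < x"
  moreover have "x \<le> exp x" using exp_ge_add_one_self[of x] by linarith
  ultimately show ?thesis by (simp add: exp_minus field_simps)
qed

text \<open>Few samples of a type are unlikely, and many samples make the factor \<open>exp (- c s)\<close> small.\<close>

lemma unsampled_exp_decay_le:
  fixes p c :: real and h s :: nat
  assumes p: "0 < p" "p < 1" and c: "0 < c" and h: "0 < h"
  shows "real (h - s) * exp (- c * s) \<le> 2 / (c * p) + (4 / (p^2 * h)) * (real s - h * p)^2"
proof -
  have unsampled: "real (h - s) * exp (- c * s) \<le> h * exp (- c * s)" by (intro mult_right_mono) auto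
  have nonneg: "0 \<le> 2 / (c * p)" "0 \<le> (4 / (p^2 * h)) * (real s - h * p)^2" using c p by simp_all
  show ?thesis
  proof (cases "h * p / 2 \<le> real s")
    case True
    define y where "y = c * p * h / 2"
    have "0 < y" unfolding y_def using c p h by simp
    have "exp (- c * s) \<le> exp (- y)" unfolding y_def using True c by (simp add: mult_left_mono mult.commute)
    then have "h * exp (- c * s) \<le> h * exp (- y)" by (intro mult_left_mono) auto
    also have "\<dots> \<le> h * (1 / y)" using exp_neg_le_inverse[OF \<open>0 < y\<close>] by (intro mult_left_mono) auto
    also have "\<dots> = 2 / (c * p)" unfolding y_def using h by simp
    finally show ?thesis using unsampled nonneg by linarith
  next
    case False
    then have "h * p / 2 \<le> \<bar>real s - h * p\<bar>" by linarith
    then have "(h * p / 2)^2 \<le> (real s - h * p)^2" using p by (metis abs_le_square_iff abs_of_nonneg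
        divide_nonneg_pos mult_nonneg_nonneg of_nat_0_le_iff less_imp_le zero_less_numeral)
    then have "(4 / (p^2 * h)) * (h * p / 2)^2 \<le> (4 / (p^2 * h)) * (real s - h * p)^2"
      by (intro mult_left_mono) auto
    moreover have "(4 / (p^2 * h)) * (h * p / 2)^2 = h" using p h by (simp add: field_simps power2_eq_square)
    moreover have "real h * exp (- c * s) \<le> real h" using c by (intro mult_right_le_one_le) auto
    ultimately show ?thesis using unsampled nonneg by linarith
  qed
qed

lemma binomial_expect_unsampled_exp_decay_le:
  fixes p c :: real and h :: nat
  assumes p: "0 < p" "p < 1" and c: "0 < c"
  shows "binomial_expect p h (\<lambda>s. real (h - s) * exp (- c * s)) \<le> 2 / (c * p) + 4 * (1 - p) / p"
proof (cases "h = 0")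
  case True
  then show ?thesis using p c by (simp add: binomial_expect_def)
next
  case False
  have "binomial_expect p h (\<lambda>s. real (h - s) * exp (- c * s))
      \<le> binomial_expect p h (\<lambda>s. 2 / (c * p) + (4 / (p^2 * h)) * (real s - h * p)^2)"
    using False p by (intro binomial_expect_mono unsampled_exp_decay_le[OF p c]) auto
  also have "\<dots> = 2 / (c * p) + (4 / (p^2 * h)) * (h * p * (1 - p))"
    by (simp only: binomial_expect_add binomial_expect_cmult binomial_expect_const
        binomial_expect_central_moment2)
  also have "\<dots> = 2 / (c * p) + 4 * (1 - p) / p" using p False by (simp add: field_simps power2_eq_square)
  finally show ?thesis .
qed

text \<open>With \<open>Y = s - h p\<close>, the shortfall is \<open>(|Y| - Y) / (2 p)\<close> and \<open>E Y = 0\<close>;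
  \<open>abs_ge_quartic\<close> at scale \<open>a = 2 \<sigma>\<close> bounds \<open>E |Y|\<close> below by the second and fourth
  central moments.\<close>

lemma binomial_expect_shortfall_ge:
  fixes p :: real and h :: nat
  assumes p: "0 < p" "p < 1" and V: "1 \<le> h * p * (1 - p)"
  shows "sqrt (h * p * (1 - p)) / (4 * p) \<le> binomial_expect p h (\<lambda>s. max 0 ((h * p - real s) / p))"
proof -
  define V where "V = h * p * (1 - p)"
  define \<sigma> where "\<sigma> = sqrt V"
  define a where "a = 2 * \<sigma>"
  have pp: "p \<in> {0..1}" using p by auto
  have \<sigma>: "1 \<le> \<sigma>" "\<sigma>^2 = V" unfolding \<sigma>_def using V unfolding V_def by auto
  have a0: "0 < a" unfolding a_def using \<sigma> by simp
  have pointwise: "(1 / (2 * p)) * ((3 / (2 * a)) * (real s - h * p)^2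
        + (- 1 / (2 * a^3)) * (real s - h * p)^4 + (- 1) * (real s - h * p))
      \<le> max 0 ((h * p - real s) / p)" for s
  proof -
    define Y where "Y = real s - h * p"
    have "max 0 ((h * p - real s) / p) = (\<bar>Y\<bar> - Y) / (2 * p)" unfolding Y_def using p
      by (auto simp: max_def field_simps abs_if)
    moreover have "3 * Y^2 / (2 * a) - Y^4 / (2 * a^3) - Y \<le> \<bar>Y\<bar> - Y" using abs_ge_quartic[OF a0, of Y] by simp
    ultimately show ?thesis unfolding Y_def[symmetric] using p by (simp add: field_simps divide_right_mono)
  qed
  have "(1 / (2 * p)) * ((3 / (2 * a)) * V + (- 1 / (2 * a^3)) * (3 * V^2 + V * (1 - 6 * p * (1 - p))) + (-1) * 0)
      = binomial_expect p h (\<lambda>s. (1 / (2 * p)) * ((3 / (2 * a)) * (real s - h * p)^2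
        + (- 1 / (2 * a^3)) * (real s - h * p)^4 + (- 1) * (real s - h * p)))"
    unfolding V_def by (simp only: binomial_expect_add binomial_expect_cmult binomial_expect_central_moment1
        binomial_expect_central_moment2 binomial_expect_central_moment4)
  also have "\<dots> \<le> binomial_expect p h (\<lambda>s. max 0 ((h * p - real s) / p))"
    using pointwise by (intro binomial_expect_mono pp)
  finally have moments: "(1 / (2 * p)) * ((3 / (2 * a)) * V - (3 * V^2 + V * (1 - 6 * p * (1 - p))) / (2 * a^3))
      \<le> binomial_expect p h (\<lambda>s. max 0 ((h * p - real s) / p))" by simp
  have "0 \<le> 6 * V * (p * (1 - p))" using p V unfolding V_def by simp
  then have "(3 * V^2 + V * (1 - 6 * p * (1 - p))) / (2 * a^3) \<le> (3 * V^2 + V) / (2 * a^3)"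
    using a0 by (intro divide_right_mono) (auto simp: algebra_simps)
  also have "\<dots> = 3 * \<sigma> / 16 + 1 / (16 * \<sigma>)" unfolding a_def \<sigma>(2)[symmetric] using \<sigma>(1)
    by (simp add: field_simps power2_eq_square power3_eq_cube)
  also have "\<dots> \<le> \<sigma> / 4" using \<sigma> mult_mono[of 1 \<sigma> 1 \<sigma>] by (simp add: field_simps)
  finally have "\<sigma> / 2 \<le> (3 / (2 * a)) * V - (3 * V^2 + V * (1 - 6 * p * (1 - p))) / (2 * a^3)"
    using \<sigma>(1) unfolding a_def \<sigma>(2)[symmetric] by (simp add: field_simps power2_eq_square)
  then have "(1 / (2 * p)) * (\<sigma> / 2)
      \<le> (1 / (2 * p)) * ((3 / (2 * a)) * V - (3 * V^2 + V * (1 - 6 * p * (1 - p))) / (2 * a^3))"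
    using p by (intro mult_left_mono) auto
  with moments show ?thesis unfolding \<sigma>_def V_def by (simp add: field_simps)
qed

section \<open>The test period and the modified algorithm\<close>

lemma sets_est_measure [measurable_cong]: "sets (est_measure t r) = sets borel"
  unfolding est_measure_def by auto

lemma space_est_measure [simp]: "space (est_measure t r) = UNIV"
  using sets_eq_imp_space_eq[OF sets_est_measure] by simp

lemma prob_space_est_measure: "r \<in> {0..1} \<Longrightarrow> prob_space (est_measure t r)"
  unfolding est_measure_def
  by (auto intro!: prob_space_uniform_measure measure_pmf.prob_space_distr)

lemma est_measure_lower_tail:
  assumes r: "r \<in> {0..1}" and d: "0 \<le> \<delta>"
  shows "measure (est_measure t r) {z. z \<le> r - \<delta>} \<le> exp (- 2 * real t * \<delta>^2)"
proof (cases "t = 0")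
  case True
  interpret prob_space "est_measure t r" using prob_space_est_measure[OF r] .
  show ?thesis using True prob_le_1[of "{z. z \<le> r - \<delta>}"] by simp
next
  case False
  have "measure (est_measure t r) {z. z \<le> r - \<delta>}
      = measure_pmf.prob (binomial_pmf t r) {x. real x / real t \<le> r - \<delta>}"
    unfolding est_measure_def using False by (simp add: measure_distr vimage_def)
  also have "\<dots> \<le> exp (- 2 * real t * \<delta>^2)"
    using binomial_distribution.prob_le'[of r t \<delta>] r d False by (simp add: binomial_distribution_def)
  finally show ?thesis .
qed

lemma est_measure_upper_tail:
  assumes r: "r \<in> {0..1}" and d: "0 \<le> \<delta>"
  shows "measure (est_measure t r) {z. r + \<delta> \<le> z} \<le> exp (- 2 * real t * \<delta>^2)"
proof (cases "t = 0")
  case True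
  interpret prob_space "est_measure t r" using prob_space_est_measure[OF r] .
  show ?thesis using True prob_le_1[of "{z. r + \<delta> \<le> z}"] by simp
next
  case False
  have "measure (est_measure t r) {z. r + \<delta> \<le> z}
      = measure_pmf.prob (binomial_pmf t r) {x. r + \<delta> \<le> real x / real t}"
    unfolding est_measure_def using False by (simp add: measure_distr vimage_def)
  also have "\<dots> \<le> exp (- 2 * real t * \<delta>^2)"
    using binomial_distribution.prob_ge'[of r t \<delta>] r d False by (simp add: binomial_distribution_def)
  finally show ?thesis .
qed

lemma (in prob_space) integral_if_const:
  assumes "A \<in> events"
  shows "(\<integral>x. (if x \<in> A then a else b :: real) \<partial>M) = a * prob A + b * (1 - prob A)"
proof -
  have int: "integrable M (\<lambda>x. (a - b) * indicator A x :: real)"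
    using assms by (intro integrable_mult_right integrable_real_indicator) (auto simp: less_top[symmetric])
  have "(\<integral>x. (if x \<in> A then a else b) \<partial>M) = (\<integral>x. b + (a - b) * indicator A x \<partial>M)"
    by (intro Bochner_Integration.integral_cong) (auto simp: indicator_def)
  also have "\<dots> = b + (a - b) * prob A"
    using assms int by (simp add: Bochner_Integration.integral_add prob_space)
  finally show ?thesis by (simp add: algebra_simps)
qed

lemma measure_pair_fst_le_snd:
  fixes M1 M2 :: "real measure" and t :: real
  assumes "prob_space M1" "prob_space M2" and sets: "sets M1 = sets borel" "sets M2 = sets borel"
  shows "measure (M1 \<Otimes>\<^sub>M M2) {z. fst z \<le> snd z} \<le> measure M1 {x. x \<le> t} + measure M2 {y. t \<le> y}"
proof -
  interpret pair_prob_space M1 M2 using assms(1,2) by (simp add: pair_prob_space_def pair_sigma_finite_def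
        prob_space_imp_sigma_finite)
  have space: "space M1 = UNIV" "space M2 = UNIV" using sets_eq_imp_space_eq[OF sets(1)]
      sets_eq_imp_space_eq[OF sets(2)] by auto
  have A: "{x. x \<le> t} \<in> sets M1" and B: "{y. t \<le> y} \<in> sets M2" using sets by auto
  have R: "{x. x \<le> t} \<times> space M2 \<in> sets (M1 \<Otimes>\<^sub>M M2)"
    "space M1 \<times> {y. t \<le> y} \<in> sets (M1 \<Otimes>\<^sub>M M2)"
    using A B by (auto intro!: pair_measureI)
  have "measure (M1 \<Otimes>\<^sub>M M2) {z. fst z \<le> snd z}
      \<le> measure (M1 \<Otimes>\<^sub>M M2) ({x. x \<le> t} \<times> space M2 \<union> space M1 \<times> {y. t \<le> y})"
    using R space by (intro P.finite_measure_mono) auto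
  also have "\<dots> \<le> measure (M1 \<Otimes>\<^sub>M M2) ({x. x \<le> t} \<times> space M2)
      + measure (M1 \<Otimes>\<^sub>M M2) (space M1 \<times> {y. t \<le> y})"
    using R by (intro measure_subadditive) (auto simp: P.emeasure_finite)
  also have "\<dots> = measure M1 {x. x \<le> t} + measure M2 {y. t \<le> y}"
    using A B by (simp add: measure_def M2.emeasure_pair_measure_Times enn2real_mult
        M1.emeasure_space_1 M2.emeasure_space_1)
  finally show ?thesis .
qed

text \<open>The estimates order the two types wrongly only if one of them deviates by \<open>(r1 - r2) / 2\<close>
  from its mean; Hoeffding's inequality bounds both events.\<close>

lemma est_measure_misorder_le:
  fixes t1 t2 :: nat and r1 r2 :: real
  assumes r: "0 \<le> r2" "r2 < r1" "r1 \<le> 1"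
  defines "c \<equiv> (r1 - r2)^2 / 2"
  shows "measure (est_measure t1 r1 \<Otimes>\<^sub>M est_measure t2 r2) {z. fst z \<le> snd z}
    \<le> exp (- c * t1) + exp (- c * t2)"
proof -
  have rr: "r1 \<in> {0..1}" "r2 \<in> {0..1}" using r by auto
  have "measure (est_measure t1 r1 \<Otimes>\<^sub>M est_measure t2 r2) {z. fst z \<le> snd z}
      \<le> measure (est_measure t1 r1) {x. x \<le> (r1 + r2) / 2} + measure (est_measure t2 r2) {y. (r1 + r2) / 2 \<le> y}"
    using prob_space_est_measure rr sets_est_measure by (intro measure_pair_fst_le_snd)
  also have "\<dots> \<le> exp (- c * t1) + exp (- c * t2)"
  proof (intro add_mono)
    have d: "0 \<le> (r1 - r2) / 2" using r by simp
    have mid: "r1 - (r1 - r2) / 2 = (r1 + r2) / 2" "r2 + (r1 - r2) / 2 = (r1 + r2) / 2"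
      by (simp_all add: field_simps)
    have rate: "- 2 * real t * ((r1 - r2) / 2)^2 = - c * t" for t :: nat
      unfolding c_def by (simp add: power2_eq_square)
    show "measure (est_measure t1 r1) {x. x \<le> (r1 + r2) / 2} \<le> exp (- c * t1)"
      using est_measure_lower_tail[OF rr(1) d, of t1] unfolding mid rate .
    show "measure (est_measure t2 r2) {y. (r1 + r2) / 2 \<le> y} \<le> exp (- c * t2)"
      using est_measure_upper_tail[OF rr(2) d, of t2] unfolding mid rate .
  qed
  finally show ?thesis .
qed

lemma alg_value_mixture:
  fixes m mt h l s1 s2 :: nat and p r1 r2 :: real
  assumes r: "0 < r2" "r2 < r1" "r1 < 1"
  defines "W1 \<equiv> worst_ratio m True (prot_level m p s1) r1 r2 (h - s1) (l - s2)"
    and "W2 \<equiv> worst_ratio m False (prot_level m p s2) r1 r2 (h - s1) (l - s2)"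
    and "c \<equiv> (r1 - r2)^2 / 2"
  obtains P where "alg_value m mt p r1 r2 h l s1 s2 = W1 * P + W2 * (1 - P)" "0 \<le> P" "P \<le> 1"
    "1 - P \<le> exp (- c * fst (test_alloc mt s1 s2)) + exp (- c * snd (test_alloc mt s1 s2))"
proof -
  define t1 t2 where "t1 = fst (test_alloc mt s1 s2)" and "t2 = snd (test_alloc mt s1 s2)"
  define M where "M = est_measure t1 r1 \<Otimes>\<^sub>M est_measure t2 r2"
  define A where "A = {z :: real \<times> real. snd z < fst z}"
  have rr: "r1 \<in> {0..1}" "r2 \<in> {0..1}" using r by auto
  interpret M: pair_prob_space "est_measure t1 r1" "est_measure t2 r2"
    using prob_space_est_measure[OF rr(1)] prob_space_est_measure[OF rr(2)]
    by (simp add: pair_prob_space_def pair_sigma_finite_def prob_space_imp_sigma_finite)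
  have "{z \<in> space (borel \<Otimes>\<^sub>M borel). snd z < (fst z :: real)} \<in> sets (borel \<Otimes>\<^sub>M borel)"
    by measurable
  moreover have "sets M = sets (borel \<Otimes>\<^sub>M borel)" unfolding M_def
    by (intro sets_pair_measure_cong sets_est_measure)
  ultimately have A: "A \<in> sets M" unfolding A_def by (simp add: space_pair_measure)
  have "alg_value m mt p r1 r2 h l s1 s2 = (\<integral>z. (if z \<in> A then W1 else W2) \<partial>M)"
    unfolding alg_value_def W1_def W2_def prot_level_def M_def A_def t1_def t2_def Let_def by simp
  also have "\<dots> = W1 * measure M A + W2 * (1 - measure M A)"
    using A unfolding M_def by (rule M.P.integral_if_const)
  finally have mixture: "alg_value m mt p r1 r2 h l s1 s2 = W1 * measure M A + W2 * (1 - measure M A)" .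
  have "1 - measure M A = measure M {z. fst z \<le> snd z}"
    using M.P.prob_compl[OF A[unfolded M_def]] unfolding M_def A_def
    by (simp add: space_pair_measure set_diff_eq not_less)
  also have "\<dots> \<le> exp (- c * t1) + exp (- c * t2)"
    unfolding M_def c_def using r by (intro est_measure_misorder_le) auto
  finally show ?thesis
    using that[OF mixture] M.P.prob_le_1[of A] unfolding M_def t1_def t2_def by simp
qed

lemma alg_value_bounds:
  assumes r: "0 < r2" "r2 < r1" "r1 < 1"
  shows "0 \<le> alg_value m mt p r1 r2 h l s1 s2"
    and "alg_value m mt p r1 r2 h l s1 s2 \<le> max (worst_ratio m True (prot_level m p s1) r1 r2 (h - s1) (l - s2))
           (worst_ratio m False (prot_level m p s2) r1 r2 (h - s1) (l - s2))"
    and "alg_value m mt p r1 r2 h l s1 s2 \<le> 1"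
proof -
  define W1 W2 where "W1 = worst_ratio m True (prot_level m p s1) r1 r2 (h - s1) (l - s2)"
    and "W2 = worst_ratio m False (prot_level m p s2) r1 r2 (h - s1) (l - s2)"
  obtain P where P: "alg_value m mt p r1 r2 h l s1 s2 = W1 * P + W2 * (1 - P)" "0 \<le> P" "P \<le> 1"
    using alg_value_mixture[OF r] unfolding W1_def W2_def by metis
  have W: "0 \<le> W1" "W1 \<le> 1" "0 \<le> W2" "W2 \<le> 1" unfolding W1_def W2_def
    using r worst_ratio_nonneg worst_ratio_le_one by auto
  show "0 \<le> alg_value m mt p r1 r2 h l s1 s2" unfolding P(1) using P W by simp
  show max: "alg_value m mt p r1 r2 h l s1 s2 \<le> max W1 W2"
    unfolding P(1) using convex_bound_le[of W1 "max W1 W2" W2 P "1 - P"] P by (simp add: mult.commute)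
  show "alg_value m mt p r1 r2 h l s1 s2 \<le> 1" using max W by simp
qed

lemma integrable_pair_binomial:
  "p \<in> {0..1} \<Longrightarrow>
    integrable (pair_pmf (binomial_pmf h p) (binomial_pmf l p)) (f :: nat \<times> nat \<Rightarrow> real)"
  using finite_set_pmf_binomial_pmf[of p h] finite_set_pmf_binomial_pmf[of p l]
  by (intro integrable_measure_pmf_finite) (auto simp: set_pair_pmf)

lemma expectation_pair_binomial_add:
  assumes "p \<in> {0..1}"
  shows "measure_pmf.expectation (pair_pmf (binomial_pmf h p) (binomial_pmf l p)) (\<lambda>s. f (fst s) + g (snd s))
    = binomial_expect p h f + binomial_expect p l g"
  using integrable_pair_binomial[OF assms]
  by (simp add: Bochner_Integration.integral_add expectation_pair_pmf_fst expectation_pair_pmf_snd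
      expectation_binomial_pmf_eq[OF assms])

lemma expectation_one_minus:
  fixes f :: "nat \<times> nat \<Rightarrow> real"
  assumes "p \<in> {0..1}"
  shows "measure_pmf.expectation (pair_pmf (binomial_pmf h p) (binomial_pmf l p)) (\<lambda>s. 1 - f s)
    = 1 - measure_pmf.expectation (pair_pmf (binomial_pmf h p) (binomial_pmf l p)) f"
proof -
  have "measure_pmf.expectation (pair_pmf (binomial_pmf h p) (binomial_pmf l p)) (\<lambda>s. 1 - f s)
    = measure_pmf.expectation (pair_pmf (binomial_pmf h p) (binomial_pmf l p)) (\<lambda>s. 1)
      - measure_pmf.expectation (pair_pmf (binomial_pmf h p) (binomial_pmf l p)) f"
    using integrable_pair_binomial[OF assms, of h l "\<lambda>_. 1"] integrable_pair_binomial[OF assms, of h l f]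
    by (rule Bochner_Integration.integral_diff)
  then show ?thesis by (simp add: measure_pmf.prob_space)
qed

lemma expected_alg_value_nonneg:
  assumes "0 < r2" "r2 < r1" "r1 < 1"
  shows "0 \<le> measure_pmf.expectation (pair_pmf (binomial_pmf h p) (binomial_pmf l p))
            (\<lambda>s. alg_value m mt p r1 r2 h l (fst s) (snd s))"
  using alg_value_bounds(1)[OF assms] by (intro Bochner_Integration.integral_nonneg) auto

lemma comp_ratio_le:
  assumes "0 < r2" "r2 < r1" "r1 < 1"
  shows "comp_ratio m mt p r1 r2 \<le> measure_pmf.expectation (pair_pmf (binomial_pmf h p) (binomial_pmf l p))
            (\<lambda>s. alg_value m mt p r1 r2 h l (fst s) (snd s))"
proof -
  have "bdd_below ((\<lambda>hl. measure_pmf.expectation (pair_pmf (binomial_pmf (fst hl) p) (binomial_pmf (snd hl) p))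
          (\<lambda>s. alg_value m mt p r1 r2 (fst hl) (snd hl) (fst s) (snd s))) ` UNIV)"
    using expected_alg_value_nonneg[OF assms] by (intro bdd_belowI[of _ 0]) auto
  from cINF_lower[OF this, of "(h, l)"] show ?thesis unfolding comp_ratio_def by simp
qed

lemma comp_ratio_le_one:
  assumes r: "0 < r2" "r2 < r1" "r1 < 1" and p: "p \<in> {0..1}"
  shows "comp_ratio m mt p r1 r2 \<le> 1"
proof -
  have "measure_pmf.expectation (pair_pmf (binomial_pmf 0 p) (binomial_pmf 0 p))
      (\<lambda>s. alg_value m mt p r1 r2 0 0 (fst s) (snd s))
    \<le> measure_pmf.expectation (pair_pmf (binomial_pmf 0 p) (binomial_pmf 0 p)) (\<lambda>s. 1)"
    using alg_value_bounds(3)[OF r] integrable_pair_binomial[OF p] by (intro integral_mono) auto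
  then show ?thesis using comp_ratio_le[OF r, of m mt p 0 0] by simp
qed

section \<open>Upper bound on the loss\<close>

lemma test_alloc_ge: "min s1 (mt div 2) \<le> fst (test_alloc mt s1 s2)" "min s2 (mt div 2) \<le> snd (test_alloc mt s1 s2)"
  unfolding test_alloc_def by auto

text \<open>When the wrong type is protected, the loss is at most \<open>C min n1 n2 / m\<close> (and at most \<open>1\<close>);
  this happens with probability \<open>Q\<close>, exponentially small in the number of tested agents.\<close>

lemma wrong_choice_loss_le:
  fixes C c Q :: real and n1 n2 s1 s2 t1 t2 M m :: nat
  assumes C: "0 \<le> C" and c: "0 < c" and m: "0 < m" and t: "min s1 M \<le> t1" "min s2 M \<le> t2"
    and Q: "0 \<le> Q" "Q \<le> exp (- c * t1) + exp (- c * t2)"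
  shows "min 1 (C * min n1 n2 / m) * Q \<le> C * (n1 * exp (- c * s1) + n2 * exp (- c * s2)) / m + 2 * exp (- c * M)"
proof -
  define w where "w = min 1 (C * min n1 n2 / m)"
  have w: "0 \<le> w" "w \<le> 1" "w \<le> C * n1 / m" "w \<le> C * n2 / m"
    unfolding w_def using C m by (auto intro!: min.coboundedI2 divide_right_mono mult_left_mono)
  have decay: "exp (- c * t) \<le> exp (- c * s) + exp (- c * M)" if "min s M \<le> t" for s t
  proof -
    have "exp (- c * t) \<le> exp (- c * min s M)" using that c by simp
    also have "\<dots> \<le> exp (- c * s) + exp (- c * M)" by (cases "s \<le> M") (auto simp: min_def)
    finally show ?thesis .
  qed
  have "w * Q \<le> w * exp (- c * s1) + w * exp (- c * s2) + 2 * (w * exp (- c * M))"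
    using mult_left_mono[OF order_trans[OF Q(2) add_mono[OF decay[OF t(1)] decay[OF t(2)]]] w(1)]
    by (simp add: algebra_simps)
  also have "\<dots> \<le> (C * n1 / m) * exp (- c * s1) + (C * n2 / m) * exp (- c * s2) + 2 * (1 * exp (- c * M))"
    using w by (intro add_mono mult_right_mono mult_left_mono) auto
  finally show ?thesis unfolding w_def using m by (simp add: field_simps)
qed

lemma alg_value_loss_le:
  fixes m mt h l s1 s2 :: nat and p r1 r2 :: real
  assumes r: "0 < r2" "r2 < r1" "r1 < 1" and p: "0 < p" "p < 1" and m: "0 < m"
  defines "c \<equiv> (r1 - r2)^2 / 2" and "C \<equiv> 2 + 2 * r1 / r2"
  defines "D1 \<equiv> \<bar>prot_level m p s1 - real (min (h - s1) m)\<bar>"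
    and "D2 \<equiv> \<bar>prot_level m p s2 - real (min (l - s2) m)\<bar>"
  shows "1 - alg_value m mt p r1 r2 h l s1 s2 \<le> C * (D1 + D2 + 2) / m
     + C * (real (h - s1) * exp (- c * s1) + real (l - s2) * exp (- c * s2)) / m
     + 2 * exp (- c * real (mt div 2))"
proof -
  define W1 W2 where "W1 = worst_ratio m True (prot_level m p s1) r1 r2 (h - s1) (l - s2)"
    and "W2 = worst_ratio m False (prot_level m p s2) r1 r2 (h - s1) (l - s2)"
  define w where "w = min 1 (C * min (h - s1) (l - s2) / m)"
  obtain P where P: "alg_value m mt p r1 r2 h l s1 s2 = W1 * P + W2 * (1 - P)" "0 \<le> P" "P \<le> 1"
    "1 - P \<le> exp (- c * fst (test_alloc mt s1 s2)) + exp (- c * snd (test_alloc mt s1 s2))"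
    using alg_value_mixture[OF r] unfolding W1_def W2_def c_def by metis
  have C: "0 \<le> C" unfolding C_def using r by simp
  have W: "W1 \<le> 1" "0 \<le> W2" "W2 \<le> 1"
    unfolding W1_def W2_def using r worst_ratio_le_one worst_ratio_nonneg by auto
  have loss1: "1 - W1 \<le> C * (D1 + 1) / m"
    using worst_ratio_protect_type1_ge[OF r(1,2) m, of "prot_level m p s1" "h - s1" "l - s2"]
      prot_level_bounds[OF p, of m s1] unfolding W1_def C_def D1_def by simp
  have "1 - W2 \<le> C * (real (min (h - s1) (l - s2)) + D2 + 1) / m"
    using worst_ratio_protect_type2_ge[OF r(1,2) m, of "h - s1" "l - s2" "prot_level m p s2"]
    unfolding W2_def C_def D2_def by simp
  moreover have D2: "0 \<le> C * (D2 + 1) / m" using C unfolding D2_def by simp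
  ultimately have loss2: "1 - W2 \<le> C * (D2 + 1) / m + w"
    using W unfolding w_def by (auto simp: min_def add_divide_distrib distrib_left)
  have "1 - alg_value m mt p r1 r2 h l s1 s2 = (1 - W1) * P + (1 - W2) * (1 - P)"
    unfolding P(1) by (simp add: algebra_simps)
  also have "\<dots> \<le> C * (D1 + 1) / m + (C * (D2 + 1) / m + w * (1 - P))"
  proof (intro add_mono)
    show "(1 - W1) * P \<le> C * (D1 + 1) / m"
      using mult_left_le[of P "1 - W1"] P W loss1 by linarith
    have "(1 - W2) * (1 - P) \<le> (C * (D2 + 1) / m + w) * (1 - P)" using loss2 P by (intro mult_right_mono) auto
    also have "\<dots> \<le> C * (D2 + 1) / m + w * (1 - P)"
      using mult_left_le[of "1 - P" "C * (D2 + 1) / m"] P D2 by (simp add: distrib_right)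
    finally show "(1 - W2) * (1 - P) \<le> C * (D2 + 1) / m + w * (1 - P)" .
  qed
  also have "w * (1 - P) \<le> C * (real (h - s1) * exp (- c * s1) + real (l - s2) * exp (- c * s2)) / m
      + 2 * exp (- c * real (mt div 2))"
    unfolding w_def using C m P r unfolding c_def by (intro wrong_choice_loss_le) (auto simp: test_alloc_ge)
  finally have "1 - alg_value m mt p r1 r2 h l s1 s2 \<le> C * (D1 + 1) / m + (C * (D2 + 1) / m
      + (C * (real (h - s1) * exp (- c * s1) + real (l - s2) * exp (- c * s2)) / m
      + 2 * exp (- c * real (mt div 2))))" by simp
  moreover have "C * (D1 + 1) / m + C * (D2 + 1) / m = C * (D1 + D2 + 2) / m"
    using m by (simp add: field_simps)
  ultimately show ?thesis by linarith
qed

lemma expected_alg_value_ge: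
  fixes m mt h l :: nat and p r1 r2 :: real
  assumes r: "0 < r2" "r2 < r1" "r1 < 1" and p: "0 < p" "p < 1" and m: "0 < m"
  defines "c \<equiv> (r1 - r2)^2 / 2" and "C \<equiv> 2 + 2 * r1 / r2"
  defines "K1 \<equiv> (1 + 1 / p) * sqrt m + 2 / (min p (1 - p))^2"
    and "K2 \<equiv> 2 / (c * p) + 4 * (1 - p) / p"
  shows "1 - (C * (2 * K1 + 2) / m + 2 * C * K2 / m + 2 * exp (- c * real (mt div 2)))
    \<le> measure_pmf.expectation (pair_pmf (binomial_pmf h p) (binomial_pmf l p))
          (\<lambda>s. alg_value m mt p r1 r2 h l (fst s) (snd s))"
proof -
  define Q where "Q = pair_pmf (binomial_pmf h p) (binomial_pmf l p)"
  define L where "L n s = \<bar>prot_level m p s - real (min (n - s) m)\<bar> + real (n - s) * exp (- c * s)"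
    for n s :: nat
  define a b where "a = C / m" and "b = 2 * C / m + 2 * exp (- c * real (mt div 2))"
  have pp: "p \<in> {0..1}" using p by auto
  have pointwise: "1 - alg_value m mt p r1 r2 h l s1 s2 \<le> (a * L h s1 + b) + a * L l s2" for s1 s2
  proof -
    have "1 - alg_value m mt p r1 r2 h l s1 s2
        \<le> C * (\<bar>prot_level m p s1 - real (min (h - s1) m)\<bar>
            + \<bar>prot_level m p s2 - real (min (l - s2) m)\<bar> + 2) / m
          + C * (real (h - s1) * exp (- c * s1) + real (l - s2) * exp (- c * s2)) / m
          + 2 * exp (- c * real (mt div 2))"
      unfolding c_def C_def by (rule alg_value_loss_le[OF r p m])
    also have "\<dots> = (a * L h s1 + b) + a * L l s2"
      unfolding L_def a_def b_def using m by (simp add: field_simps)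
    finally show ?thesis .
  qed
  have "measure_pmf.expectation Q (\<lambda>s. 1 - alg_value m mt p r1 r2 h l (fst s) (snd s))
      \<le> measure_pmf.expectation Q (\<lambda>s. (a * L h (fst s) + b) + a * L l (snd s))"
    using pointwise unfolding Q_def by (intro integral_mono integrable_pair_binomial[OF pp])
  also have "\<dots> = a * binomial_expect p h (L h) + b + a * binomial_expect p l (L l)"
    using expectation_pair_binomial_add[OF pp, where f = "\<lambda>x. a * L h x + b" and g = "\<lambda>x. a * L l x"]
    unfolding Q_def by (simp add: binomial_expect_add binomial_expect_cmult binomial_expect_const)
  also have "\<dots> \<le> a * (K1 + K2) + b + a * (K1 + K2)"
  proof -
    have "0 < c" unfolding c_def using r by simp
    then have "binomial_expect p n (L n) \<le> K1 + K2" for n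
      unfolding L_def binomial_expect_add K1_def K2_def
      using binomial_expect_level_error_le[OF p m, of n] binomial_expect_unsampled_exp_decay_le[OF p, of c n]
      by (intro add_mono)
    moreover have "0 \<le> a" unfolding a_def C_def using r by simp
    ultimately show ?thesis by (intro add_mono mult_left_mono) auto
  qed
  also have "\<dots> = C * (2 * K1 + 2) / m + 2 * C * K2 / m + 2 * exp (- c * real (mt div 2))"
    unfolding a_def b_def using m by (simp add: field_simps)
  finally show ?thesis unfolding Q_def expectation_one_minus[OF pp] by simp
qed

lemma comp_ratio_ge:
  fixes m mt :: nat and p r1 r2 :: real
  assumes r: "0 < r2" "r2 < r1" "r1 < 1" and p: "0 < p" "p < 1" and m: "0 < m"
  defines "c \<equiv> (r1 - r2)^2 / 2" and "C \<equiv> 2 + 2 * r1 / r2"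
  shows "1 - (C * (2 * ((1 + 1 / p) * sqrt m + 2 / (min p (1 - p))^2) + 2) / m
      + 2 * C * (2 / (c * p) + 4 * (1 - p) / p) / m + 2 * exp (- c * real (mt div 2)))
    \<le> comp_ratio m mt p r1 r2"
  unfolding comp_ratio_def c_def C_def
  by (rule cINF_greatest) (use expected_alg_value_ge[OF r p m] in auto)

section \<open>Lower bound on the loss\<close>

text \<open>With at least \<open>m\<close> unsampled type-2 agents, sent first by the adversary, each unsampled type-1
  agent above the protection level costs \<open>r1 - r2\<close>, whichever type is protected.\<close>

lemma alg_value_le_shortfall:
  fixes m mt h l s1 s2 :: nat and p r1 r2 :: real
  assumes r: "0 < r2" "r2 < r1" "r1 < 1" and p: "0 < p" "p < 1" and m: "0 < m"
    and h: "h \<le> m" and l: "m \<le> l - s2"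
  shows "alg_value m mt p r1 r2 h l s1 s2 \<le> 1 - (r1 - r2) / r1 * max 0 ((h * p - real s1) / p) / m"
proof -
  define g where "g = max 0 ((h * p - real s1) / p)"
  define x where "x = prot_level m p s1"
  have x: "0 \<le> x" "x \<le> m" "x \<le> real s1 * (1 - p) / p" using prot_level_bounds[OF p] unfolding x_def
    by (auto simp: prot_level_def)
  have g: "g \<le> max 0 (real (h - s1) - x)" "g \<le> real (h - s1)"
  proof -
    have "g \<le> max 0 (real (h - s1) - x) \<and> g \<le> real (h - s1)"
    proof (cases "s1 \<le> h")
      case True
      have eq: "(h * p - real s1) / p = real h - real s1 / p" using p by (simp add: field_simps)
      have "real s1 * (1 - p) / p = real s1 / p - real s1" using p by (simp add: field_simps)
      moreover have "real s1 * p \<le> real s1" using p by (intro mult_right_le_one_le) auto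
      then have "real s1 \<le> real s1 / p" using p by (simp add: field_simps)
      ultimately show ?thesis using x(3) True unfolding g_def eq by (auto simp: of_nat_diff)
    next
      case False
      have "real h * p \<le> real h" using p by (intro mult_right_le_one_le) auto
      then have "real h * p - real s1 \<le> 0" using False by simp
      then show ?thesis unfolding g_def using p by (simp add: divide_nonpos_pos)
    qed
    then show "g \<le> max 0 (real (h - s1) - x)" "g \<le> real (h - s1)" by auto
  qed
  have k: "0 \<le> (r1 - r2) / r1 / m" using r by simp
  have n: "h - s1 \<le> m" "m \<le> l - s2" using h l by auto
  have "worst_ratio m True x r1 r2 (h - s1) (l - s2) \<le> 1 - (r1 - r2) / r1 * g / m"
    using worst_ratio_protect_type1_le[OF r(1,2) m n x(1,2)] mult_left_mono[OF g(1) k]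
    by (simp add: field_simps)
  moreover have "worst_ratio m False (prot_level m p s2) r1 r2 (h - s1) (l - s2) \<le> 1 - (r1 - r2) / r1 * g / m"
    using worst_ratio_protect_type2_le[OF r(1,2) m n, of "prot_level m p s2"] mult_left_mono[OF g(2) k]
    by (simp add: field_simps)
  ultimately show ?thesis using alg_value_bounds(2)[OF r, of m mt p h l s1 s2] unfolding x_def g_def
    by (simp del: max.bounded_iff) (meson max.boundedI order_trans)
qed

text \<open>With \<open>m^2\<close> type-2 agents, fewer than \<open>m\<close> of them remain unsampled only if \<open>s2\<close>
  deviates from its mean by about \<open>(1 - p) m^2 / 2\<close>; the quadratic penalty dominates that
  event.\<close>

lemma alg_value_adversary_le:
  fixes m mt h s1 s2 :: nat and p r1 r2 :: real
  assumes r: "0 < r2" "r2 < r1" "r1 < 1" and p: "0 < p" "p < 1" and m: "0 < m"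
    and h: "h \<le> m" and q: "2 \<le> (1 - p) * m"
  defines "k \<equiv> (r1 - r2) / r1" and "e \<equiv> (1 - p) * m^2 / 2"
  shows "alg_value m mt p r1 r2 h (m^2) s1 s2
    \<le> 1 - k / m * max 0 ((h * p - real s1) / p) + k / e^2 * (real s2 - real (m^2) * p)^2"
proof (cases "m \<le> m^2 - s2")
  case True
  then have "alg_value m mt p r1 r2 h (m^2) s1 s2 \<le> 1 - k / m * max 0 ((h * p - real s1) / p)"
    using alg_value_le_shortfall[OF r p m h] unfolding k_def by simp
  moreover have "0 \<le> k / e^2 * (real s2 - real (m^2) * p)^2" unfolding k_def using r by simp
  ultimately show ?thesis by linarith
next
  case False
  define l where "l = m^2"
  have k0: "0 \<le> k" unfolding k_def using r by simp
  have e0: "0 < e" unfolding e_def using p m by simp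
  from False have "l < m + s2" unfolding l_def by arith
  then have "real l < real m + real s2" by (metis of_nat_add of_nat_less_iff)
  moreover have "2 * real m \<le> real l - real l * p"
    using mult_right_mono[OF q, of "real m"] unfolding l_def by (simp add: power2_eq_square algebra_simps)
  moreover have "2 * e = real l - real l * p" unfolding e_def l_def by (simp add: field_simps)
  ultimately have "e \<le> real s2 - l * p" by linarith
  then have "e^2 \<le> (real s2 - l * p)^2" using e0 by (intro power_mono) auto
  then have "1 \<le> (real s2 - l * p)^2 / e^2" using e0 by simp
  then have "k \<le> k / e^2 * (real s2 - l * p)^2" using mult_left_mono[OF _ k0] by fastforce
  moreover have "k / m * max 0 ((h * p - real s1) / p) \<le> k"
  proof -
    have "real h * p \<le> real m * p" using p h by (simp add: mult_right_mono)
    then have "h * p - real s1 \<le> m * p" by linarith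
    then have "(h * p - real s1) / p \<le> m" using p by (simp add: pos_divide_le_eq)
    then show ?thesis using k0 m by (simp add: field_simps mult_left_mono)
  qed
  moreover have "alg_value m mt p r1 r2 h l s1 s2 \<le> 1" using alg_value_bounds(3)[OF r] .
  ultimately show ?thesis unfolding l_def by linarith
qed

lemma expected_alg_value_adversary_le:
  fixes m mt h :: nat and p r1 r2 :: real
  assumes r: "0 < r2" "r2 < r1" "r1 < 1" and p: "0 < p" "p < 1" and m: "0 < m"
    and h: "real h \<le> p * m" and V: "1 \<le> h * p * (1 - p)" and q: "2 \<le> (1 - p) * m"
  defines "k \<equiv> (r1 - r2) / r1"
  shows "measure_pmf.expectation (pair_pmf (binomial_pmf h p) (binomial_pmf (m^2) p))
            (\<lambda>s. alg_value m mt p r1 r2 h (m^2) (fst s) (snd s))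
         \<le> 1 - k * (sqrt (h * p * (1 - p)) / (4 * p)) / m + k * (4 * p / ((1 - p) * m^2))"
proof -
  define l e where "l = m^2" and "e = (1 - p) * m^2 / 2"
  define g where "g s = max 0 ((h * p - real s) / p)" for s :: nat
  have pp: "p \<in> {0..1}" using p by auto
  have k0: "0 \<le> k" unfolding k_def using r by simp
  have "p * real m \<le> real m" using p by (intro mult_left_le_one_le) auto
  then have "h \<le> m" using h by simp
  have "measure_pmf.expectation (pair_pmf (binomial_pmf h p) (binomial_pmf l p))
      (\<lambda>s. alg_value m mt p r1 r2 h l (fst s) (snd s))
    \<le> measure_pmf.expectation (pair_pmf (binomial_pmf h p) (binomial_pmf l p))
      (\<lambda>s. (1 - k / m * g (fst s)) + k / e^2 * (real (snd s) - l * p)^2)"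
    using alg_value_adversary_le[OF r p m \<open>h \<le> m\<close> q] unfolding k_def e_def g_def l_def
    by (intro integral_mono integrable_pair_binomial[OF pp])
  also have "\<dots> = binomial_expect p h (\<lambda>s. 1 - k / m * g s)
      + binomial_expect p l (\<lambda>s. k / e^2 * (real s - l * p)^2)"
    by (rule expectation_pair_binomial_add[OF pp])
  also have "\<dots> = 1 - k / m * binomial_expect p h g + k / e^2 * (l * p * (1 - p))"
    by (simp only: binomial_expect_diff binomial_expect_cmult binomial_expect_const
        binomial_expect_central_moment2)
  also have "k / e^2 * (l * p * (1 - p)) = k * (4 * p / ((1 - p) * m^2))"
  proof -
    define q where "q = 1 - p"
    have "0 < q" unfolding q_def using p by simp
    then show ?thesis unfolding e_def l_def q_def[symmetric] using p m by (simp add: field_simps power2_eq_square)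
  qed
  finally have "measure_pmf.expectation (pair_pmf (binomial_pmf h p) (binomial_pmf l p))
      (\<lambda>s. alg_value m mt p r1 r2 h l (fst s) (snd s))
    \<le> 1 - k / m * binomial_expect p h g + k * (4 * p / ((1 - p) * m^2))" .
  moreover have "k * (sqrt (h * p * (1 - p)) / (4 * p)) / m \<le> k / m * binomial_expect p h g"
    unfolding g_def using mult_left_mono[OF binomial_expect_shortfall_ge[OF p V], of "k / m"] k0
    by (simp add: mult.commute)
  ultimately show ?thesis unfolding l_def by linarith
qed

section \<open>Asymptotics\<close>

lemma eventually_real_ge: "\<forall>\<^sub>F m in at_top. X \<le> real (m :: nat)"
  using filterlim_real_sequentially unfolding filterlim_at_top by auto

lemma loss_bound_le_inverse_sqrt:
  fixes m mt :: nat and a b c :: real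
  assumes m: "4 \<le> real m" and mt: "3 * sqrt m \<le> real mt" and c: "0 < c" and ab: "0 \<le> a" "0 \<le> b"
  shows "a * sqrt m / m + b / m + 2 * exp (- c * real (mt div 2)) \<le> (a + b + 2 / c) / sqrt m"
proof -
  define s where "s = sqrt m"
  have s: "2 \<le> s" "real m = s * s" unfolding s_def using m real_sqrt_le_mono[of 4 "real m"] by auto
  have "s \<le> s * s" using s(1) mult_left_mono[of 1 s s] by simp
  then have quotients: "a * s / m = a / s" "b / m \<le> b / s" unfolding s(2) using s(1) ab
    by (auto intro!: divide_left_mono)
  have "s \<le> real (mt div 2)" using mt s(1) unfolding s_def by linarith
  have "exp (- c * real (mt div 2)) \<le> 1 / (c * real (mt div 2))"
    using exp_neg_le_inverse[of "c * real (mt div 2)"] c s(1) \<open>s \<le> real (mt div 2)\<close> by simp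
  also have "\<dots> \<le> 1 / (c * s)"
    using c s(1) \<open>s \<le> real (mt div 2)\<close> by (intro divide_left_mono mult_left_mono mult_pos_pos) auto
  finally have "exp (- c * real (mt div 2)) \<le> 1 / (c * s)" .
  with quotients show ?thesis unfolding s_def[symmetric] using c s by (simp add: add_divide_distrib)
qed

lemma one_minus_comp_ratio_bigo:
  fixes p r1 r2 :: real and mt :: "nat \<Rightarrow> nat"
  assumes r: "0 < r2" "r2 < r1" "r1 < 1" and p: "0 < p" "p < 1"
    and mt: "(\<lambda>m. real (mt m)) \<in> \<omega>(\<lambda>m. sqrt (real m))"
  shows "(\<lambda>m. 1 - comp_ratio m (mt m) p r1 r2) \<in> O(\<lambda>m. 1 / (p * sqrt (real m)))"
proof -
  define c C where "c = (r1 - r2)^2 / 2" and "C = 2 + 2 * r1 / r2"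
  define K where "K = 2 / (c * p) + 4 * (1 - p) / p"
  define a b where "a = 2 * C * (1 + 1 / p)" and "b = C * (4 / (min p (1 - p))^2 + 2) + 2 * C * K"
  have c: "0 < c" unfolding c_def using r by simp
  then have ab: "0 \<le> a" "0 \<le> b" unfolding a_def b_def C_def K_def using r p by auto
  show ?thesis
  proof (rule bigoI[where c = "(a + b + 2 / c) * p"])
    show "\<forall>\<^sub>F m in at_top. norm (1 - comp_ratio m (mt m) p r1 r2)
        \<le> (a + b + 2 / c) * p * norm (1 / (p * sqrt (real m)))"
      using smallomegaD[OF mt, of 3] eventually_real_ge[of 4]
    proof eventually_elim
      case (elim m)
      then have m: "4 \<le> real m" "0 < m" and "3 * sqrt m \<le> real (mt m)" by auto
      have "1 - comp_ratio m (mt m) p r1 r2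
          \<le> a * sqrt m / m + b / m + 2 * exp (- c * real (mt m div 2))"
      proof -
        have "a * sqrt m / m + b / m = C * (2 * ((1 + 1 / p) * sqrt m + 2 / (min p (1 - p))^2) + 2) / m
            + 2 * C * K / m"
          unfolding a_def b_def by (simp add: add_divide_distrib[symmetric] algebra_simps)
        then show ?thesis using comp_ratio_ge[OF r p m(2), of "mt m"]
          unfolding c_def[symmetric] C_def[symmetric] K_def[symmetric] by linarith
      qed
      also have "\<dots> \<le> (a + b + 2 / c) / sqrt m"
        by (rule loss_bound_le_inverse_sqrt) (use m \<open>3 * sqrt m \<le> real (mt m)\<close> c ab in auto)
      finally show ?case using comp_ratio_le_one[OF r, of p m "mt m"] p by simp
    qed
  qed
qed

lemma one_minus_comp_ratio_ge:
  fixes m mt :: nat and p r1 r2 :: real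
  assumes r: "0 < r2" "r2 < r1" "r1 < 1" and p: "0 < p" "p < 1" and m: "2 \<le> p^2 * (1 - p) * m"
  defines "k \<equiv> (r1 - r2) / r1"
  shows "k * sqrt ((1 - p) / 2) / (4 * sqrt m) - k * (4 * p / ((1 - p) * m^2)) \<le> 1 - comp_ratio m mt p r1 r2"
proof -
  define q where "q = 1 - p"
  define h where "h = nat \<lfloor>p * m\<rfloor>"
  have q: "0 < q" "q < 1" unfolding q_def using p by auto
  have "p^2 * q * m \<le> p * m" "p^2 * q * m \<le> q * m"
    using p q mult_right_mono[of "p * q" 1 "p * m"] mult_right_mono[of "p^2" 1 "q * m"]
    by (simp_all add: power2_eq_square algebra_simps mult_le_one)
  then have pm: "2 \<le> p * m" and qm: "2 \<le> (1 - p) * m" using m unfolding q_def by linarith+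
  then have "0 < m" using p by (cases m) auto
  have "real h = of_int \<lfloor>p * m\<rfloor>" unfolding h_def using p by simp
  then have h: "real h \<le> p * m" "p * m / 2 \<le> real h"
    using of_int_floor_le[of "p * m"] real_of_int_floor_gt_diff_one[of "p * m"] pm by linarith+
  have Vq: "p^2 * q * m / 2 \<le> h * p * q"
    using mult_right_mono[OF h(2), of "p * q"] p q by (simp add: power2_eq_square algebra_simps)
  then have V: "1 \<le> h * p * (1 - p)" using m unfolding q_def by linarith
  have "sqrt (p^2 * q * m / 2) = sqrt (p^2) * sqrt (q / 2) * sqrt m"
    by (simp only: real_sqrt_mult[symmetric]) (simp add: algebra_simps)
  then have "p * sqrt (q / 2) * sqrt m = sqrt (p^2 * q * m / 2)" using p by simp
  also have "\<dots> \<le> sqrt (h * p * (1 - p))" using Vq unfolding q_def by (rule real_sqrt_le_mono)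
  finally have "p * sqrt (q / 2) * sqrt m \<le> sqrt (h * p * (1 - p))" .
  moreover have "0 \<le> k / (4 * p * m)" unfolding k_def using r p by simp
  ultimately have "k / (4 * p * m) * (p * sqrt (q / 2) * sqrt m) \<le> k / (4 * p * m) * sqrt (h * p * (1 - p))"
    by (intro mult_left_mono)
  moreover have "k * sqrt (q / 2) / (4 * sqrt m) = k / (4 * p * m) * (p * sqrt (q / 2) * sqrt m)"
    using p \<open>0 < m\<close> by (simp add: field_simps real_div_sqrt)
  ultimately have "k * sqrt (q / 2) / (4 * sqrt m) \<le> k * (sqrt (h * p * (1 - p)) / (4 * p)) / m"
    by (simp add: field_simps)
  moreover have "comp_ratio m mt p r1 r2 \<le> 1 - k * (sqrt (h * p * (1 - p)) / (4 * p)) / m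
      + k * (4 * p / ((1 - p) * m^2))"
    using comp_ratio_le[OF r] expected_alg_value_adversary_le[OF r p \<open>0 < m\<close> h(1) V qm]
    unfolding k_def by (meson order_trans)
  ultimately show ?thesis unfolding q_def by linarith
qed

lemma one_minus_comp_ratio_bigomega:
  fixes p r1 r2 :: real and mt :: "nat \<Rightarrow> nat"
  assumes r: "0 < r2" "r2 < r1" "r1 < 1" and p: "0 < p" "p < 1"
  shows "(\<lambda>m. 1 - comp_ratio m (mt m) p r1 r2) \<in> \<Omega>(\<lambda>m. 1 / (p * sqrt (real m)))"
proof -
  define A B where "A = (r1 - r2) / r1 * sqrt ((1 - p) / 2) / 4"
    and "B = (r1 - r2) / r1 * (4 * p / (1 - p))"
  have A: "0 < A" and B: "0 \<le> B" unfolding A_def B_def using r p by auto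
  show ?thesis
  proof (rule landau_omega.bigI[of "A * p / 2"])
    show "0 < A * p / 2" using A p by simp
    show "\<forall>\<^sub>F m in at_top. A * p / 2 * norm (1 / (p * sqrt (real m)))
        \<le> norm (1 - comp_ratio m (mt m) p r1 r2)"
      using eventually_real_ge[of "max 1 (max (2 / (p^2 * (1 - p))) (2 * B / A))"]
    proof eventually_elim
      case (elim m)
      then have m: "1 \<le> real m" "2 \<le> p^2 * (1 - p) * m" "2 * B \<le> A * m"
        using p A by (auto simp: field_simps)
      have "sqrt m * 1 \<le> sqrt m * sqrt m" using m(1) by (intro mult_left_mono) auto
      then have "2 * B * sqrt m \<le> A * m * m" using mult_mono[OF m(3), of "sqrt m" m] A by simp
      then have "B / m^2 \<le> A / (2 * sqrt m)" using m(1) by (simp add: field_simps power2_eq_square)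
      moreover have "A / sqrt m - B / m^2 \<le> 1 - comp_ratio m (mt m) p r1 r2"
        using one_minus_comp_ratio_ge[OF r p m(2), of "mt m"] unfolding A_def B_def
        by (simp add: field_simps)
      ultimately have "A / (2 * sqrt m) \<le> 1 - comp_ratio m (mt m) p r1 r2" by linarith
      then show ?case using p by simp
    qed
  qed
qed

theorem proposition3:
  fixes p r1 r2 :: real and mt :: "nat \<Rightarrow> nat"
  assumes "0 < p" "p < 1" "0 < r2" "r2 < r1" "r1 < 1"
    and "(\<lambda>m. real (mt m)) \<in> \<omega>(\<lambda>m. sqrt (real m))"
  shows "(\<lambda>m. 1 - comp_ratio m (mt m) p r1 r2) \<in> \<Theta>(\<lambda>m. 1 / (p * sqrt (real m)))"
  using assms by (intro bigthetaI one_minus_comp_ratio_bigo one_minus_comp_ratio_bigomega)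

end
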